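(* For any $\sigma\in S_n$ and $I,J\in\mathcal I_\lambda$, the Laurent polynomial $W_{\sigma,I}(z_J,z,h)$ is divisible by $E(z_J,h)$ in $\mathbb C[z_1^{\pm1},\dots,z_n^{\pm1},h^{\pm1}]$.
   Context: Fix $N,n$, $\lambda\in\mathbb Z_{\ge0}^N$ with $\sum\lambda_k=n$; $\lambda^{(k)}=\lambda_1+\dots+\lambda_k$, $\lambda^{\{1\}}=\lambda^{(1)}+\dots+\lambda^{(N-1)}$. $\mathcal I_\lambda$ = ordered partitions $I=(I_1,\dots,I_N)$ of $\{1,\dots,n\}$ with $|I_k|=\lambda_k$; write $I_1\cup\dots\cup I_k=\{i^{(k)}_1<\dots<i^{(k)}_{\lambda^{(k)}}\}$. For $\sigma\in S_n$, $\sigma(I)=(\sigma(I_1),\dots,\sigma(I_N))$. Weight functions: variables $t^{(k)}_a$ ($1\le k\le N-1$, $1\le a\le\lambda^{(k)}$), $z_1,\dots,z_n$, $h$; set $t^{(N)}_a=z_a$. Let $U_I=\prod_{k=1}^{N-1}\prod_{a=1}^{\lambda^{(k)}}\Big(\prod_{c\le\lambda^{(k+1)}:\,i^{(k+1)}_c<i^{(k)}_a}(1-ht^{(k+1)}_c/t^{(k)}_a)\prod_{c\le\lambda^{(k+1)}:\,i^{(k+1)}_c>i^{(k)}_a}(1-t^{(k+1)}_c/t^{(k)}_a)\prod_{b=a+1}^{\lambda^{(k)}}\frac{1-ht^{(k)}_b/t^{(k)}_a}{1-t^{(k)}_b/t^{(k)}_a}\Big)$ and $W_I=(1-h)^{\lambda^{\{1\}}}\mathrm{Sym}_{t^{(1)}}\cdots\mathrm{Sym}_{t^{(N-1)}}U_I$,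 where $\mathrm{Sym}_{t^{(k)}}f=\sum_{\pi\in S_{\lambda^{(k)}}}f|_{t^{(k)}_a\mapsto t^{(k)}_{\pi(a)}}$; $W_I$ is a Laurent polynomial in $t,z,h$. For $\sigma\in S_n$, $W_{\sigma,I}(t,z,h)=W_{\sigma^{-1}(I)}(t,z_{\sigma(1)},\dots,z_{\sigma(n)},h)$. For $J\in\mathcal I_\lambda$, $f(z_J,z,h)$ denotes the substitution $t^{(k)}_a=z_{j^{(k)}_a}$ where $J_1\cup\dots\cup J_k=\{j^{(k)}_1<\dots<j^{(k)}_{\lambda^{(k)}}\}$. $E(t,h)=\prod_{k=1}^{N-1}\prod_{a,b=1}^{\lambda^{(k)}}(1-ht^{(k)}_b/t^{(k)}_a)$. *)

theory Defs
  imports Complex_Main "HOL-Library.Poly_Mapping" "HOL-Combinatorics.Permutations"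
begin

text \<open>Indices of blocks run over 1..N, indices of points over 1..n.
  lam :: nat => nat gives lambda_1..lambda_N (values at other indices are irrelevant).
  An ordered partition I is a map k |-> I_k (blocks for k in 1..N, empty elsewhere).\<close>

definition lamsum :: "(nat \<Rightarrow> nat) \<Rightarrow> nat \<Rightarrow> nat" where
  "lamsum lam k = (\<Sum>i=1..k. lam i)"

definition ordered_partition :: "nat \<Rightarrow> nat \<Rightarrow> (nat \<Rightarrow> nat) \<Rightarrow> (nat \<Rightarrow> nat set) \<Rightarrow> bool" where
  "ordered_partition N n lam I \<longleftrightarrow>
     (\<forall>k\<in>{1..N}. I k \<subseteq> {1..n} \<and> card (I k) = lam k) \<and>
     (\<forall>k. k \<notin> {1..N} \<longrightarrow> I k = {}) \<and>
     (\<forall>k\<in>{1..N}. \<forall>l\<in>{1..N}. k \<noteq> l \<longrightarrow> I k \<inter> I l = {}) \<and>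
     (\<Union>k\<in>{1..N}. I k) = {1..n}"

text \<open>i^(k)_a: the a-th smallest element (a >= 1) of I_1 \<union> ... \<union> I_k.\<close>
definition pidx :: "(nat \<Rightarrow> nat set) \<Rightarrow> nat \<Rightarrow> nat \<Rightarrow> nat" where
  "pidx I k a = sorted_list_of_set (\<Union>i\<in>{1..k}. I i) ! (a - 1)"

definition tvar :: "nat \<Rightarrow> (nat \<Rightarrow> nat \<Rightarrow> complex) \<Rightarrow> (nat \<Rightarrow> complex) \<Rightarrow> nat \<Rightarrow> nat \<Rightarrow> complex" where
  "tvar N t z k a = (if k = N then z a else t k a)"

definition U_fun :: "nat \<Rightarrow> (nat \<Rightarrow> nat) \<Rightarrow> (nat \<Rightarrow> nat set) \<Rightarrow>
    (nat \<Rightarrow> nat \<Rightarrow> complex) \<Rightarrow> (nat \<Rightarrow> complex) \<Rightarrow> complex \<Rightarrow> complex" where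
  "U_fun N lam I t z h =
    (\<Prod>k\<in>{1..N-1}. \<Prod>a\<in>{1..lamsum lam k}.
       (\<Prod>c\<in>{c\<in>{1..lamsum lam (k+1)}. pidx I (k+1) c < pidx I k a}.
           1 - h * tvar N t z (k+1) c / tvar N t z k a) *
       (\<Prod>c\<in>{c\<in>{1..lamsum lam (k+1)}. pidx I (k+1) c > pidx I k a}.
           1 - tvar N t z (k+1) c / tvar N t z k a) *
       (\<Prod>b\<in>{a+1..lamsum lam k}.
           (1 - h * tvar N t z k b / tvar N t z k a) / (1 - tvar N t z k b / tvar N t z k a)))"

text \<open>Tuples of permutations (pi_1,...,pi_{N-1}), pi_k in S_{lambda^(k)}; this realises
  Sym_{t^(1)} ... Sym_{t^(N-1)}.\<close>
definition sym_perms :: "nat \<Rightarrow> (nat \<Rightarrow> nat) \<Rightarrow> (nat \<Rightarrow> nat \<Rightarrow> nat) set" where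
  "sym_perms N lam = {\<pi>. \<forall>k. (k \<in> {1..N-1} \<longrightarrow> \<pi> k permutes {1..lamsum lam k}) \<and>
                               (k \<notin> {1..N-1} \<longrightarrow> \<pi> k = id)}"

text \<open>W_I(t,z,h), evaluated at complex points (where the rational expression is defined).\<close>
definition W_fun :: "nat \<Rightarrow> (nat \<Rightarrow> nat) \<Rightarrow> (nat \<Rightarrow> nat set) \<Rightarrow>
    (nat \<Rightarrow> nat \<Rightarrow> complex) \<Rightarrow> (nat \<Rightarrow> complex) \<Rightarrow> complex \<Rightarrow> complex" where
  "W_fun N lam I t z h =
    (1 - h) ^ (\<Sum>k=1..N-1. lamsum lam k) *
    (\<Sum>\<pi>\<in>sym_perms N lam. U_fun N lam I (\<lambda>k a. t k (\<pi> k a)) z h)"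

definition W_sigma :: "nat \<Rightarrow> (nat \<Rightarrow> nat) \<Rightarrow> (nat \<Rightarrow> nat) \<Rightarrow> (nat \<Rightarrow> nat set) \<Rightarrow>
    (nat \<Rightarrow> nat \<Rightarrow> complex) \<Rightarrow> (nat \<Rightarrow> complex) \<Rightarrow> complex \<Rightarrow> complex" where
  "W_sigma N lam \<sigma> I t z h = W_fun N lam (\<lambda>k. inv \<sigma> ` I k) t (\<lambda>a. z (\<sigma> a)) h"

definition zJ :: "(nat \<Rightarrow> nat set) \<Rightarrow> (nat \<Rightarrow> complex) \<Rightarrow> nat \<Rightarrow> nat \<Rightarrow> complex" where
  "zJ J z k a = z (pidx J k a)"

definition E_fun :: "nat \<Rightarrow> (nat \<Rightarrow> nat) \<Rightarrow> (nat \<Rightarrow> nat \<Rightarrow> complex) \<Rightarrow> complex \<Rightarrow> complex" where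
  "E_fun N lam t h = (\<Prod>k\<in>{1..N-1}. \<Prod>a\<in>{1..lamsum lam k}. \<Prod>b\<in>{1..lamsum lam k}.
       1 - h * t k b / t k a)"

text \<open>Laurent polynomials over C in variables h (index 0), z_1..z_n (indices 1..n):
  a finitely supported map from exponent vectors (nat =>0 int) to coefficients.\<close>
definition laurent_vars :: "((nat \<Rightarrow>\<^sub>0 int) \<Rightarrow>\<^sub>0 complex) \<Rightarrow> nat \<Rightarrow> bool" where
  "laurent_vars Q n \<longleftrightarrow> (\<forall>m\<in>Poly_Mapping.keys Q. Poly_Mapping.keys m \<subseteq> {0..n})"

definition laurent_eval :: "((nat \<Rightarrow>\<^sub>0 int) \<Rightarrow>\<^sub>0 complex) \<Rightarrow> nat \<Rightarrow> (nat \<Rightarrow> complex) \<Rightarrow> complex \<Rightarrow> complex" where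
  "laurent_eval Q n z h = (\<Sum>m\<in>Poly_Mapping.keys Q. Poly_Mapping.lookup Q m * h powi Poly_Mapping.lookup m 0 *
       (\<Prod>i\<in>{1..n}. z i powi Poly_Mapping.lookup m i))"

end

theory Submission
  imports Defs "HOL-Combinatorics.Transposition"
begin

text \<open>Multiplying \<open>W\<^sub>I\<close> by the level Vandermonde \<open>\<Prod>\<^sub>k \<Prod>\<^sub>a\<^sub>\<noteq>\<^sub>b (t^(k)_a - t^(k)_b)\<close> clears
  all its denominators. The result is a Laurent polynomial that is symmetric in each level and
  vanishes on every diagonal \<open>t^(k)_a = t^(k)_b\<close>, hence divisible by the squared Vandermonde;
  so \<open>W\<^sub>I\<close> itself is a Laurent polynomial. After the substitution \<open>t = z\<^sub>J\<close> every cleared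
  summand either vanishes or contains all the factors of \<open>E(z\<^sub>J, h)\<close>. This gives
  \<open>E \<cdot> S = W \<cdot> V\<close> with \<open>S\<close> a Laurent polynomial and \<open>V\<close> the Vandermonde of \<open>z\<^sub>J\<close>. Since
  \<open>V\<close> does not involve \<open>h\<close> while \<open>E\<close> is generically nonzero as a function of \<open>h\<close>, \<open>V\<close> divides
  \<open>S\<close> and \<open>W = E \<cdot> S / V\<close>. Identities between Laurent polynomials are carried from generic
  points to the whole torus by approaching along lines.\<close>

section \<open>Laurent polynomial functions\<close>

type_synonym 'v monomials = "(complex \<times> ('v \<Rightarrow> int)) list"

definition torus :: "'v set \<Rightarrow> ('v \<Rightarrow> complex) set" where
  "torus V = {x. \<forall>v\<in>V. x v \<noteq> 0}"

definition laurent_monomial :: "'v set \<Rightarrow> ('v \<Rightarrow> int) \<Rightarrow> ('v \<Rightarrow> complex) \<Rightarrow> complex" where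
  "laurent_monomial V e x = (\<Prod>v\<in>V. x v powi e v)"

definition monomial_sum :: "'v set \<Rightarrow> 'v monomials \<Rightarrow> ('v \<Rightarrow> complex) \<Rightarrow> complex" where
  "monomial_sum V M x = (\<Sum>p\<leftarrow>M. fst p * laurent_monomial V (snd p) x)"

text \<open>Multivariate Laurent polynomials are modelled by their evaluation maps on the torus.\<close>

definition laurent_on :: "'v set \<Rightarrow> (('v \<Rightarrow> complex) \<Rightarrow> complex) \<Rightarrow> bool" where
  "laurent_on V F \<longleftrightarrow> (\<exists>M. \<forall>x\<in>torus V. F x = monomial_sum V M x)"

lemma laurent_on_cong:
  "laurent_on V F \<Longrightarrow> (\<And>x. x \<in> torus V \<Longrightarrow> F x = G x) \<Longrightarrow> laurent_on V G"
  unfolding laurent_on_def by metis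

lemma laurent_on_const: "laurent_on V (\<lambda>x. c)"
  unfolding laurent_on_def monomial_sum_def laurent_monomial_def
  by (rule exI[of _ "[(c, \<lambda>_. 0)]"]) simp

lemma monomial_sum_append:
  "monomial_sum V (M1 @ M2) x = monomial_sum V M1 x + monomial_sum V M2 x"
  by (simp add: monomial_sum_def)

lemma laurent_on_add: "laurent_on V F \<Longrightarrow> laurent_on V G \<Longrightarrow> laurent_on V (\<lambda>x. F x + G x)"
  unfolding laurent_on_def by (metis monomial_sum_append)

definition monomials_mult :: "'v monomials \<Rightarrow> 'v monomials \<Rightarrow> 'v monomials" where
  "monomials_mult M1 M2 = concat (map (\<lambda>p. map (\<lambda>q. (fst p * fst q, \<lambda>v. snd p v + snd q v)) M2) M1)"

lemma laurent_monomial_add: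
  "x \<in> torus V \<Longrightarrow>
     laurent_monomial V (\<lambda>v. e1 v + e2 v) x = laurent_monomial V e1 x * laurent_monomial V e2 x"
  unfolding laurent_monomial_def torus_def
  by (auto simp: power_int_add prod.distrib[symmetric] intro!: prod.cong)

lemma monomial_sum_mult:
  "x \<in> torus V \<Longrightarrow>
     monomial_sum V (monomials_mult M1 M2) x = monomial_sum V M1 x * monomial_sum V M2 x"
proof (induction M1)
  case Nil
  then show ?case by (simp add: monomials_mult_def monomial_sum_def)
next
  case (Cons p M1)
  have "monomial_sum V (map (\<lambda>q. (fst p * fst q, \<lambda>v. snd p v + snd q v)) M2) x
      = fst p * laurent_monomial V (snd p) x * monomial_sum V M2 x"
    unfolding monomial_sum_def using Cons.prems
    by (induction M2) (auto simp: laurent_monomial_add algebra_simps)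
  moreover have "monomials_mult (p # M1) M2
      = map (\<lambda>q. (fst p * fst q, \<lambda>v. snd p v + snd q v)) M2 @ monomials_mult M1 M2"
    by (simp add: monomials_mult_def)
  ultimately show ?case
    using Cons by (simp add: monomial_sum_append monomial_sum_def distrib_right)
qed

lemma laurent_on_mult: "laurent_on V F \<Longrightarrow> laurent_on V G \<Longrightarrow> laurent_on V (\<lambda>x. F x * G x)"
  unfolding laurent_on_def by (metis monomial_sum_mult)

lemma laurent_on_var_power_int:
  assumes "finite V" "v \<in> V"
  shows "laurent_on V (\<lambda>x. x v powi k)"
proof -
  have "laurent_monomial V (\<lambda>u. if u = v then k else 0) x = x v powi k" for x
    unfolding laurent_monomial_def using assms by (subst prod.remove[of V v]) auto
  then show ?thesis
    unfolding laurent_on_def monomial_sum_def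
    by (intro exI[of _ "[(1, \<lambda>u. if u = v then k else 0)]"]) simp
qed

lemma laurent_on_var: "finite V \<Longrightarrow> v \<in> V \<Longrightarrow> laurent_on V (\<lambda>x. x v)"
  using laurent_on_var_power_int[of V v 1] by simp

lemma laurent_on_diff: "laurent_on V F \<Longrightarrow> laurent_on V G \<Longrightarrow> laurent_on V (\<lambda>x. F x - G x)"
  using laurent_on_add[OF _ laurent_on_mult[OF laurent_on_const[of V "-1"]]] by simp

lemma laurent_on_divide_var:
  "finite V \<Longrightarrow> v \<in> V \<Longrightarrow> laurent_on V F \<Longrightarrow> laurent_on V (\<lambda>x. F x / x v)"
  using laurent_on_mult[OF _ laurent_on_var_power_int[of V v "-1"]]
  by (simp add: divide_inverse power_int_minus)

lemma laurent_on_power: "laurent_on V F \<Longrightarrow> laurent_on V (\<lambda>x. F x ^ k)"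
  by (induction k) (auto intro: laurent_on_mult laurent_on_const)

lemma laurent_on_sum:
  "(\<And>i. i \<in> A \<Longrightarrow> laurent_on V (F i)) \<Longrightarrow> laurent_on V (\<lambda>x. \<Sum>i\<in>A. F i x)"
  by (induction A rule: infinite_finite_induct) (auto intro: laurent_on_add laurent_on_const)

lemma laurent_on_prod:
  "(\<And>i. i \<in> A \<Longrightarrow> laurent_on V (F i)) \<Longrightarrow> laurent_on V (\<lambda>x. \<Prod>i\<in>A. F i x)"
  by (induction A rule: infinite_finite_induct) (auto intro: laurent_on_mult laurent_on_const)

lemma laurent_on_sum_list:
  "(\<And>p. p \<in> set M \<Longrightarrow> laurent_on V (F p)) \<Longrightarrow> laurent_on V (\<lambda>x. \<Sum>p\<leftarrow>M. F p x)"
  by (induction M) (auto intro: laurent_on_add laurent_on_const)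

lemma laurent_on_compose:
  assumes "finite V" "finite W" "\<And>v. v \<in> V \<Longrightarrow> s v \<in> W" "laurent_on V F"
  shows "laurent_on W (\<lambda>y. F (\<lambda>v. y (s v)))"
proof -
  obtain M where M: "\<forall>x\<in>torus V. F x = monomial_sum V M x"
    using assms(4) unfolding laurent_on_def by blast
  have "laurent_on W (\<lambda>y. \<Sum>p\<leftarrow>M. fst p * (\<Prod>v\<in>V. y (s v) powi snd p v))"
    using assms(1-3)
    by (intro laurent_on_sum_list laurent_on_mult[OF laurent_on_const] laurent_on_prod
        laurent_on_var_power_int) auto
  moreover have "(\<Sum>p\<leftarrow>M. fst p * (\<Prod>v\<in>V. y (s v) powi snd p v)) = F (\<lambda>v. y (s v))"
    if "y \<in> torus W" for y
  proof -
    have "(\<lambda>v. y (s v)) \<in> torus V" using that assms(3) by (auto simp: torus_def)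
    then show ?thesis using M by (simp add: monomial_sum_def laurent_monomial_def)
  qed
  ultimately show ?thesis by (rule laurent_on_cong) simp
qed

section \<open>The identity principle\<close>

lemma eventually_line_in_torus:
  assumes "finite V" "x \<in> torus V"
  shows "eventually (\<lambda>e. (\<lambda>v. x v + e * d v) \<in> torus V) (at (0::complex))"
proof -
  have "eventually (\<lambda>e. x v + e * d v \<noteq> 0) (at (0::complex))" if "v \<in> V" for v
  proof (rule tendsto_imp_eventually_ne)
    show "((\<lambda>e. x v + e * d v) \<longlongrightarrow> x v) (at 0)" by (auto intro!: tendsto_eq_intros)
    show "x v \<noteq> 0" using assms(2) that by (auto simp: torus_def)
  qed
  then have "eventually (\<lambda>e. \<forall>v\<in>V. x v + e * d v \<noteq> 0) (at (0::complex))"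
    by (intro eventually_ball_finite[OF assms(1)]) blast
  then show ?thesis
    by (simp add: torus_def)
qed

lemma monomial_sum_tendsto_line:
  assumes "x \<in> torus V"
  shows "((\<lambda>e. monomial_sum V M (\<lambda>v. x v + e * d v)) \<longlongrightarrow> monomial_sum V M x) (at (0::complex))"
proof -
  have "((\<lambda>e. laurent_monomial V m (\<lambda>v. x v + e * d v)) \<longlongrightarrow> laurent_monomial V m x) (at 0)" for m
    unfolding laurent_monomial_def
  proof (rule tendsto_prod)
    fix v assume "v \<in> V"
    then have "x v \<noteq> 0" using assms by (auto simp: torus_def)
    moreover have "((\<lambda>e. x v + e * d v) \<longlongrightarrow> x v) (at 0)" by (auto intro!: tendsto_eq_intros)
    ultimately show "((\<lambda>e. (x v + e * d v) powi m v) \<longlongrightarrow> x v powi m v) (at 0)"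
      by (rule tendsto_power_int[rotated])
  qed
  then show ?thesis
    unfolding monomial_sum_def by (induction M) (auto intro!: tendsto_add tendsto_mult_left)
qed

lemma laurent_on_tendsto_line:
  assumes "finite V" "laurent_on V F" "x \<in> torus V"
  shows "((\<lambda>e. F (\<lambda>v. x v + e * d v)) \<longlongrightarrow> F x) (at (0::complex))"
proof -
  obtain M where M: "\<forall>y\<in>torus V. F y = monomial_sum V M y"
    using assms(2) unfolding laurent_on_def by blast
  have "eventually (\<lambda>e. monomial_sum V M (\<lambda>v. x v + e * d v) = F (\<lambda>v. x v + e * d v)) (at 0)"
    using eventually_line_in_torus[OF assms(1,3), of d] by eventually_elim (use M in auto)
  from Lim_transform_eventually[OF monomial_sum_tendsto_line[OF assms(3)] this] show ?thesis
    using M assms(3) by simp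
qed

lemma laurent_on_eq_if_eventually_eq_on_line:
  assumes "finite V" "laurent_on V F" "laurent_on V G" "x \<in> torus V"
    and "eventually (\<lambda>e. F (\<lambda>v. x v + e * d v) = G (\<lambda>v. x v + e * d v)) (at (0::complex))"
  shows "F x = G x"
  using Lim_transform_eventually[OF laurent_on_tendsto_line[OF assms(1,2,4)] assms(5)]
    laurent_on_tendsto_line[OF assms(1,3,4)]
  by (rule tendsto_unique[OF at_neq_bot])

lemma eventually_affine_ne_zero:
  assumes "(a::complex) \<noteq> 0 \<or> b \<noteq> 0"
  shows "eventually (\<lambda>e. a + e * b \<noteq> 0) (at 0)"
proof (cases "a = 0")
  case True
  have "eventually (\<lambda>e::complex. e \<noteq> 0) (at 0)" by (simp add: eventually_at_filter)
  then show ?thesis by eventually_elim (use True assms in auto)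
next
  case False
  have "((\<lambda>e. a + e * b) \<longlongrightarrow> a + 0 * b) (at (0::complex))" by (intro tendsto_intros)
  then show ?thesis using False by (intro tendsto_imp_eventually_ne) auto
qed

lemma eventually_line_off_diagonals:
  assumes "finite A" "\<forall>i\<in>A. d (pu i) \<noteq> d (pw i)"
  shows "eventually (\<lambda>e. \<forall>i\<in>A. x (pu i) + e * d (pu i) \<noteq> x (pw i) + e * d (pw i)) (at (0::complex))"
proof (rule eventually_ball_finite[OF assms(1)], rule ballI)
  fix i assume "i \<in> A"
  then have "eventually (\<lambda>e. (x (pu i) - x (pw i)) + e * (d (pu i) - d (pw i)) \<noteq> 0) (at 0)"
    using assms(2) by (intro eventually_affine_ne_zero) simp
  then show "eventually (\<lambda>e. x (pu i) + e * d (pu i) \<noteq> x (pw i) + e * d (pw i)) (at 0)"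
    by eventually_elim (simp add: algebra_simps)
qed

text \<open>Identity principle: the point is approached along a line \<open>x + e d\<close> with \<open>d\<close> injective on
  \<open>V\<close>, which avoids all diagonals for small \<open>e \<noteq> 0\<close>.\<close>

lemma laurent_on_eq_if_eq_off_diagonals:
  assumes "finite V" "laurent_on V F" "laurent_on V G" "finite A"
    and "\<forall>i\<in>A. pu i \<in> V \<and> pw i \<in> V \<and> pu i \<noteq> pw i"
    and "\<And>x. x \<in> torus V \<Longrightarrow> \<forall>i\<in>A. x (pu i) \<noteq> x (pw i) \<Longrightarrow> F x = G x"
    and "x \<in> torus V"
  shows "F x = G x"
proof -
  obtain c :: "_ \<Rightarrow> nat" where c: "inj_on c V"
    using finite_imp_inj_to_nat_seg[OF assms(1)] by blast
  define d where "d v = (of_nat (c v) :: complex)" for v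
  have "\<forall>i\<in>A. d (pu i) \<noteq> d (pw i)"
    using assms(5) c by (auto simp: d_def dest: inj_onD)
  then have "eventually (\<lambda>e. \<forall>i\<in>A. x (pu i) + e * d (pu i) \<noteq> x (pw i) + e * d (pw i)) (at 0)"
    by (rule eventually_line_off_diagonals[OF assms(4)])
  moreover note eventually_line_in_torus[OF assms(1,7), of d]
  ultimately have "eventually (\<lambda>e. F (\<lambda>v. x v + e * d v) = G (\<lambda>v. x v + e * d v)) (at 0)"
    by eventually_elim (use assms(6) in auto)
  then show ?thesis by (rule laurent_on_eq_if_eventually_eq_on_line[OF assms(1-3,7)])
qed

lemma laurent_on_cancel_diff:
  assumes "finite V" "u \<in> V" "w \<in> V" "u \<noteq> w" "laurent_on V F" "laurent_on V G"
    and "\<And>x. x \<in> torus V \<Longrightarrow> (x u - x w) * F x = (x u - x w) * G x"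
    and "x \<in> torus V"
  shows "F x = G x"
  by (rule laurent_on_eq_if_eq_off_diagonals[OF assms(1,5,6), of "{()}" "\<lambda>_. u" "\<lambda>_. w"])
    (use assms in auto)

section \<open>Divisibility by differences of variables\<close>

definition power_int_diff_quotient :: "int \<Rightarrow> complex \<Rightarrow> complex \<Rightarrow> complex" where
  "power_int_diff_quotient k a b = (if 0 \<le> k then (\<Sum>i<nat k. b ^ (nat k - Suc i) * a ^ i)
     else - (\<Sum>i<nat (-k). b ^ (nat (-k) - Suc i) * a ^ i) * (a powi k * b powi k))"

lemma power_int_diff_factor:
  assumes "a \<noteq> 0" "b \<noteq> 0"
  shows "a powi k - b powi k = (a - b) * power_int_diff_quotient k a b"
proof (cases "0 \<le> k")
  case True
  then have "a powi k - b powi k = a ^ nat k - b ^ nat k"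
    by (metis nat_0_le power_int_of_nat)
  also have "\<dots> = (a - b) * (\<Sum>i<nat k. b ^ (nat k - Suc i) * a ^ i)"
    by (rule power_diff_sumr2)
  finally show ?thesis using True by (simp add: power_int_diff_quotient_def)
next
  case False
  define m where "m = nat (-k)"
  have k: "k = - int m" using False m_def by simp
  have "a powi k - b powi k = - (a ^ m - b ^ m) * (inverse (a ^ m) * inverse (b ^ m))"
    using assms by (simp add: k power_int_minus field_simps)
  also have "a ^ m - b ^ m = (a - b) * (\<Sum>i<m. b ^ (m - Suc i) * a ^ i)"
    by (rule power_diff_sumr2)
  finally show ?thesis
    using False by (simp add: power_int_diff_quotient_def m_def[symmetric] k power_int_minus)
qed

lemma laurent_on_power_int_diff_quotient:
  assumes "finite V" "u \<in> V" "w \<in> V"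
  shows "laurent_on V (\<lambda>x. power_int_diff_quotient k (x u) (x w))"
proof -
  have sum: "laurent_on V (\<lambda>x. \<Sum>i<nat k. x w ^ (nat k - Suc i) * x u ^ i)" for k
    using assms by (intro laurent_on_sum laurent_on_mult laurent_on_power laurent_on_var)
  have "laurent_on V
      (\<lambda>x. - (\<Sum>i<nat (-k). x w ^ (nat (-k) - Suc i) * x u ^ i) * (x u powi k * x w powi k))"
    using assms laurent_on_diff[OF laurent_on_const sum, of 0]
    by (intro laurent_on_mult laurent_on_var_power_int) simp_all
  with sum show ?thesis
    unfolding power_int_diff_quotient_def by (cases "0 \<le> k") simp_all
qed

definition monomial_sum_diff_quotient ::
    "'v set \<Rightarrow> 'v \<Rightarrow> 'v \<Rightarrow> 'v monomials \<Rightarrow> ('v \<Rightarrow> complex) \<Rightarrow> complex" where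
  "monomial_sum_diff_quotient V u w M x = (\<Sum>p\<leftarrow>M.
     fst p * power_int_diff_quotient (snd p u) (x u) (x w) * (\<Prod>v\<in>V-{u}. x v powi snd p v))"

lemma monomial_sum_diff_factor:
  assumes "finite V" "u \<in> V" "w \<in> V" "x \<in> torus V"
  shows "monomial_sum V M x - monomial_sum V M (x(u := x w))
    = (x u - x w) * monomial_sum_diff_quotient V u w M x"
proof -
  define y where "y = x(u := x w)"
  have mono: "laurent_monomial V e x - laurent_monomial V e y
      = (x u - x w) * power_int_diff_quotient (e u) (x u) (x w) * (\<Prod>v\<in>V-{u}. x v powi e v)" for e
  proof -
    have "(\<Prod>v\<in>V-{u}. y v powi e v) = (\<Prod>v\<in>V-{u}. x v powi e v)"
      unfolding y_def by (rule prod.cong) auto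
    then have "laurent_monomial V e x - laurent_monomial V e y
        = (x u powi e u - x w powi e u) * (\<Prod>v\<in>V-{u}. x v powi e v)"
      unfolding laurent_monomial_def using assms(1,2) by (simp add: prod.remove y_def algebra_simps)
    then show ?thesis
      using assms(2-4) by (simp add: power_int_diff_factor torus_def)
  qed
  show ?thesis
    unfolding y_def[symmetric] monomial_sum_def monomial_sum_diff_quotient_def
      sum_list_subtractf[symmetric] sum_list_const_mult[symmetric] right_diff_distrib[symmetric] mono
    by (simp add: ac_simps)
qed

lemma laurent_on_factor_diff:
  assumes "finite V" "u \<in> V" "w \<in> V" "laurent_on V F"
    and "\<And>x. x \<in> torus V \<Longrightarrow> x u = x w \<Longrightarrow> F x = 0"
  shows "\<exists>G. laurent_on V G \<and> (\<forall>x\<in>torus V. F x = (x u - x w) * G x)"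
proof -
  obtain M where M: "\<forall>x\<in>torus V. F x = monomial_sum V M x"
    using assms(4) unfolding laurent_on_def by blast
  have "laurent_on V (monomial_sum_diff_quotient V u w M)"
    unfolding monomial_sum_diff_quotient_def using assms(1-3)
    by (intro laurent_on_sum_list laurent_on_mult laurent_on_const laurent_on_prod
        laurent_on_power_int_diff_quotient laurent_on_var_power_int) auto
  moreover have "F x = (x u - x w) * monomial_sum_diff_quotient V u w M x" if x: "x \<in> torus V" for x
  proof -
    have "x(u := x w) \<in> torus V" using x assms(3) by (auto simp: torus_def)
    then have "monomial_sum V M (x(u := x w)) = 0" using assms(5) M by fastforce
    then show ?thesis using monomial_sum_diff_factor[OF assms(1-3) x, of M] M x by simp
  qed
  ultimately show ?thesis by blast
qed

lemma laurent_on_factor_diff_square: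
  assumes "finite V" "u \<in> V" "w \<in> V" "u \<noteq> w" "laurent_on V G"
    and "\<And>x. x \<in> torus V \<Longrightarrow> x u = x w \<Longrightarrow> G x = 0"
    and "\<And>x. x \<in> torus V \<Longrightarrow> G (\<lambda>v. x (transpose u w v)) = G x"
  shows "\<exists>R. laurent_on V R \<and> (\<forall>x\<in>torus V. G x = (x u - x w)^2 * R x)"
proof -
  let ?swap = "\<lambda>x v. x (transpose u w v)"
  obtain G1 where G1: "laurent_on V G1" "\<forall>x\<in>torus V. G x = (x u - x w) * G1 x"
    using laurent_on_factor_diff[OF assms(1-3,5,6)] by blast
  have swap_in: "transpose u w v \<in> V" if "v \<in> V" for v
    using that assms(2,3) by (auto simp: transpose_def)
  have swap_torus: "?swap x \<in> torus V" if "x \<in> torus V" for x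
    using that swap_in by (auto simp: torus_def)
  have anti: "G1 (?swap x) = - G1 x" if "x \<in> torus V" for x
  proof (rule laurent_on_cancel_diff[OF assms(1-4) _ _ _ that])
    show "laurent_on V (\<lambda>x. G1 (?swap x))"
      by (rule laurent_on_compose[OF assms(1,1) swap_in G1(1)])
    show "laurent_on V (\<lambda>x. - G1 x)" using laurent_on_diff[OF laurent_on_const G1(1), of 0] by simp
    fix x assume x: "x \<in> torus V"
    have "(x w - x u) * G1 (?swap x) = (x u - x w) * G1 x"
      using G1(2) swap_torus[OF x] x assms(7)[OF x] by fastforce
    then show "(x u - x w) * G1 (?swap x) = (x u - x w) * - G1 x"
      by (simp add: algebra_simps)
  qed
  have "G1 x = 0" if "x \<in> torus V" "x u = x w" for x
  proof -
    have "?swap x = x" using that(2) by (auto simp: transpose_def)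
    then show ?thesis using anti[OF that(1)] by simp
  qed
  then obtain G2 where G2: "laurent_on V G2" "\<forall>x\<in>torus V. G1 x = (x u - x w) * G2 x"
    using laurent_on_factor_diff[OF assms(1-3) G1(1)] by blast
  show ?thesis
    using G1(2) G2 by (intro exI[of _ G2]) (simp add: power2_eq_square)
qed

text \<open>A point of the diagonal \<open>x u = x w\<close> is approached along a line inside the diagonal
  that leaves all the other diagonals.\<close>

lemma laurent_on_factor_diff_off_diagonals:
  assumes "finite V" "u \<in> V" "w \<in> V" "laurent_on V Z" "finite A"
    and "\<forall>i\<in>A. pu i \<in> V \<and> pw i \<in> V \<and> pu i \<noteq> pw i \<and> {pu i, pw i} \<noteq> {u, w}"
    and "\<And>x. x \<in> torus V \<Longrightarrow> x u = x w \<Longrightarrow> \<forall>i\<in>A. x (pu i) \<noteq> x (pw i) \<Longrightarrow> Z x = 0"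
  shows "\<exists>Z'. laurent_on V Z' \<and> (\<forall>x\<in>torus V. Z x = (x u - x w) * Z' x)"
proof (rule laurent_on_factor_diff[OF assms(1-4)])
  fix x assume x: "x \<in> torus V" "x u = x w"
  obtain c :: "_ \<Rightarrow> nat" where c: "inj_on c V"
    using finite_imp_inj_to_nat_seg[OF assms(1)] by blast
  define r where "r v = (if v = w then u else v)" for v
  define d where "d v = (of_nat (c (r v)) :: complex)" for v
  have "r (pu i) \<noteq> r (pw i)" "r (pu i) \<in> V" "r (pw i) \<in> V" if "i \<in> A" for i
    using assms(2,6) that unfolding r_def by (auto simp: doubleton_eq_iff)
  then have "\<forall>i\<in>A. d (pu i) \<noteq> d (pw i)"
    using c by (auto simp: d_def dest: inj_onD)
  then have "eventually (\<lambda>e. \<forall>i\<in>A. x (pu i) + e * d (pu i) \<noteq> x (pw i) + e * d (pw i)) (at 0)"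
    by (rule eventually_line_off_diagonals[OF assms(5)])
  moreover note eventually_line_in_torus[OF assms(1) x(1), of d]
  ultimately have "eventually (\<lambda>e. Z (\<lambda>v. x v + e * d v) = 0) (at 0)"
    by eventually_elim (use assms(7) x(2) in \<open>simp add: d_def r_def\<close>)
  then show "Z x = 0"
    using laurent_on_eq_if_eventually_eq_on_line[OF assms(1,4) laurent_on_const x(1)] by blast
qed

lemma laurent_on_factor_prod_diff_squares:
  assumes "finite V" "finite A" "\<forall>i\<in>A. pu i \<in> V \<and> pw i \<in> V \<and> pu i \<noteq> pw i"
    and "inj_on (\<lambda>i. {pu i, pw i}) A" "laurent_on V G"
    and "\<forall>i\<in>A. \<exists>R. laurent_on V R \<and> (\<forall>x\<in>torus V. G x = (x (pu i) - x (pw i))^2 * R x)"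
  shows "\<exists>R. laurent_on V R \<and> (\<forall>x\<in>torus V. G x = (\<Prod>i\<in>A. (x (pu i) - x (pw i))^2) * R x)"
  using assms(2-4,6)
proof (induction A rule: finite_induct)
  case empty
  then show ?case using assms(5) by auto
next
  case (insert j A)
  define D where "D x = (\<Prod>i\<in>A. (x (pu i) - x (pw i))^2)" for x :: "_ \<Rightarrow> complex"
  define u where "u = pu j"
  define w where "w = pw j"
  have uw: "u \<in> V" "w \<in> V" "u \<noteq> w" using insert.prems(1) unfolding u_def w_def by auto
  have "{pu i, pw i} \<noteq> {u, w}" if "i \<in> A" for i
    using insert.prems(2) insert.hyps(2) that unfolding u_def w_def by (auto simp: inj_on_insert)
  then have A: "\<forall>i\<in>A. pu i \<in> V \<and> pw i \<in> V \<and> pu i \<noteq> pw i \<and> {pu i, pw i} \<noteq> {u, w}"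
    using insert.prems(1) by blast
  have D_ne: "D x \<noteq> 0" if "\<forall>i\<in>A. x (pu i) \<noteq> x (pw i)" for x
    using that insert.hyps(1) by (simp add: D_def)
  have laurent_D: "laurent_on V D"
    unfolding D_def using assms(1) insert.prems(1)
    by (intro laurent_on_prod laurent_on_power laurent_on_diff laurent_on_var) auto
  obtain R where R: "laurent_on V R" "\<forall>x\<in>torus V. G x = D x * R x"
    using insert.IH insert.prems(1,2,3) unfolding D_def by (auto simp: inj_on_insert)
  obtain R' where R': "laurent_on V R'" "\<forall>x\<in>torus V. G x = (x u - x w)^2 * R' x"
    using insert.prems(3) unfolding u_def w_def by auto
  have "R x = 0" if "x \<in> torus V" "x u = x w" "\<forall>i\<in>A. x (pu i) \<noteq> x (pw i)" for x
    using R(2) R'(2) D_ne[OF that(3)] that(1,2) by force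
  then obtain R1 where R1: "laurent_on V R1" "\<forall>x\<in>torus V. R x = (x u - x w) * R1 x"
    using laurent_on_factor_diff_off_diagonals[OF assms(1) uw(1,2) R(1) insert.hyps(1) A] by blast
  have R1_eq: "D x * R1 x = (x u - x w) * R' x" if "x \<in> torus V" for x
  proof (rule laurent_on_cancel_diff[OF assms(1) uw _ _ _ that])
    show "laurent_on V (\<lambda>x. D x * R1 x)" by (rule laurent_on_mult[OF laurent_D R1(1)])
    show "laurent_on V (\<lambda>x. (x u - x w) * R' x)"
      using assms(1) uw by (intro laurent_on_mult laurent_on_diff laurent_on_var R'(1))
    show "(x u - x w) * (D x * R1 x) = (x u - x w) * ((x u - x w) * R' x)" if "x \<in> torus V" for x
    proof -
      have "(x u - x w) * (D x * R1 x) = G x" using R(2) R1(2) that by (simp add: ac_simps)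
      also have "\<dots> = (x u - x w) * ((x u - x w) * R' x)"
        using R'(2) that by (simp add: power2_eq_square)
      finally show ?thesis .
    qed
  qed
  have "R1 x = 0" if "x \<in> torus V" "x u = x w" "\<forall>i\<in>A. x (pu i) \<noteq> x (pw i)" for x
    using R1_eq[OF that(1)] D_ne[OF that(3)] that(2) by simp
  then obtain R2 where R2: "laurent_on V R2" "\<forall>x\<in>torus V. R1 x = (x u - x w) * R2 x"
    using laurent_on_factor_diff_off_diagonals[OF assms(1) uw(1,2) R1(1) insert.hyps(1) A] by blast
  show ?case
  proof (intro exI[of _ R2] conjI ballI)
    fix x assume "x \<in> torus V"
    then show "G x = (\<Prod>i\<in>insert j A. (x (pu i) - x (pw i))^2) * R2 x"
      using R(2) R1(2) R2(2) insert.hyps unfolding u_def w_def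
      by (simp add: D_def power2_eq_square ac_simps)
  qed (rule R2(1))
qed

text \<open>The diagonals \<open>x u = x w\<close> are stable under moving \<open>h\<close>, and \<open>E\<close> is generically nonzero
  along such moves.\<close>

lemma laurent_on_factor_prod_diffs:
  assumes "finite V" "finite A" "laurent_on V E" "laurent_on V S" "laurent_on V L"
    and "\<forall>i\<in>A. pu i \<in> V \<and> pw i \<in> V \<and> pu i \<noteq> pw i \<and> pu i \<noteq> h \<and> pw i \<noteq> h"
    and "\<And>x. x \<in> torus V \<Longrightarrow> eventually (\<lambda>e. E (x(h := x h + e)) \<noteq> 0) (at 0)"
    and "\<And>x. x \<in> torus V \<Longrightarrow> E x * S x = L x * (\<Prod>i\<in>A. x (pu i) - x (pw i))"
  shows "\<exists>Q. laurent_on V Q \<and> (\<forall>x\<in>torus V. S x = (\<Prod>i\<in>A. x (pu i) - x (pw i)) * Q x)"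
  using assms(2,4,6,8)
proof (induction A arbitrary: S rule: finite_induct)
  case empty
  then show ?case by auto
next
  case (insert i A S)
  define u where "u = pu i"
  define w where "w = pw i"
  define D where "D x = (\<Prod>i\<in>A. x (pu i) - x (pw i))" for x :: "_ \<Rightarrow> complex"
  have uw: "u \<in> V" "w \<in> V" "u \<noteq> w" "u \<noteq> h" "w \<noteq> h"
    using insert.prems(2) unfolding u_def w_def by auto
  have laurent_D: "laurent_on V D"
    unfolding D_def using assms(1) insert.prems(2)
    by (intro laurent_on_prod laurent_on_diff laurent_on_var) auto
  have eq: "E x * S x = L x * ((x u - x w) * D x)" if "x \<in> torus V" for x
    using insert.prems(3)[OF that] insert.hyps unfolding D_def u_def w_def by simp
  have "S x = 0" if x: "x \<in> torus V" "x u = x w" for x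
  proof -
    define d where "d v = (if v = h then 1 else 0 :: complex)" for v
    have line: "(\<lambda>v. x v + e * d v) = x(h := x h + e)" for e by (auto simp: d_def)
    have "eventually (\<lambda>e. S (\<lambda>v. x v + e * d v) = 0) (at 0)"
      using assms(7)[OF x(1)] eventually_line_in_torus[OF assms(1) x(1), of d]
    proof eventually_elim
      case (elim e)
      then have "E (x(h := x h + e)) * S (x(h := x h + e)) = 0"
        using eq[of "x(h := x h + e)"] x(2) uw by (simp add: line)
      then show ?case using elim(1) by (simp add: line)
    qed
    with laurent_on_eq_if_eventually_eq_on_line[OF assms(1) insert.prems(1) laurent_on_const x(1)]
    show "S x = 0" by blast
  qed
  then obtain S1 where S1: "laurent_on V S1" "\<forall>x\<in>torus V. S x = (x u - x w) * S1 x"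
    using laurent_on_factor_diff[OF assms(1) uw(1,2) insert.prems(1)] by blast
  have "E x * S1 x = L x * D x" if "x \<in> torus V" for x
  proof (rule laurent_on_cancel_diff[OF assms(1) uw(1-3) _ _ _ that])
    show "laurent_on V (\<lambda>x. E x * S1 x)" by (rule laurent_on_mult[OF assms(3) S1(1)])
    show "laurent_on V (\<lambda>x. L x * D x)" by (rule laurent_on_mult[OF assms(5) laurent_D])
    show "(x u - x w) * (E x * S1 x) = (x u - x w) * (L x * D x)" if "x \<in> torus V" for x
      using eq[OF that] S1(2) that by (simp add: ac_simps)
  qed
  then obtain Q where Q: "laurent_on V Q" "\<forall>x\<in>torus V. S1 x = D x * Q x"
    using insert.IH[OF S1(1)] insert.prems(2) unfolding D_def by auto
  show ?case
    using S1(2) Q insert.hyps unfolding D_def u_def w_def by (intro exI[of _ Q]) auto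
qed

section \<open>Ordered partitions\<close>

definition initial_union :: "(nat \<Rightarrow> nat set) \<Rightarrow> nat \<Rightarrow> nat set" where
  "initial_union I k = (\<Union>i\<in>{1..k}. I i)"

context
  fixes N n :: nat and lam :: "nat \<Rightarrow> nat" and I :: "nat \<Rightarrow> nat set"
  assumes op: "ordered_partition N n lam I"
begin

lemma initial_union_subset: "initial_union I k \<subseteq> {1..n}"
  using op unfolding ordered_partition_def initial_union_def
  by (metis UN_least atLeastAtMost_iff empty_subsetI)

lemma initial_union_mono: "k \<le> l \<Longrightarrow> initial_union I k \<subseteq> initial_union I l"
  unfolding initial_union_def by (rule UN_mono) auto

lemma initial_union_N: "initial_union I N = {1..n}"
  using op unfolding ordered_partition_def initial_union_def by simp

lemma card_initial_union:
  assumes "k \<le> N"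
  shows "card (initial_union I k) = lamsum lam k"
proof -
  have "\<forall>i\<in>{1..k}. I i \<subseteq> {1..n}" "\<forall>i\<in>{1..k}. \<forall>j\<in>{1..k}. i \<noteq> j \<longrightarrow> I i \<inter> I j = {}"
    using op assms unfolding ordered_partition_def by auto
  then have "card (initial_union I k) = (\<Sum>i=1..k. card (I i))"
    unfolding initial_union_def by (intro card_UN_disjoint) (auto intro: finite_subset)
  also have "\<dots> = lamsum lam k"
    using op assms unfolding ordered_partition_def lamsum_def by (intro sum.cong) auto
  finally show ?thesis .
qed

lemma lamsum_N: "lamsum lam N = n"
  using card_initial_union[of N] initial_union_N by simp

lemma length_sorted_initial_union:
  "k \<le> N \<Longrightarrow> length (sorted_list_of_set (initial_union I k)) = lamsum lam k"
  using card_initial_union by simp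

lemma bij_betw_pidx:
  assumes "k \<le> N"
  shows "bij_betw (pidx I k) {1..lamsum lam k} (initial_union I k)"
proof -
  let ?xs = "sorted_list_of_set (initial_union I k)"
  have "bij_betw (\<lambda>a. a - 1) {1..lamsum lam k} {..<lamsum lam k}"
    by (rule bij_betwI[where g = Suc]) auto
  moreover have "bij_betw ((!) ?xs) {..<lamsum lam k} (initial_union I k)"
    using length_sorted_initial_union[OF assms] finite_subset[OF initial_union_subset]
    by (intro bij_betw_nth) auto
  ultimately show ?thesis
    unfolding pidx_def initial_union_def[symmetric] by (rule bij_betw_trans[unfolded comp_def])
qed

lemma pidx_strict_mono:
  assumes "k \<le> N" "a \<in> {1..lamsum lam k}" "b \<in> {1..lamsum lam k}" "a < b"
  shows "pidx I k a < pidx I k b"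
  using assms length_sorted_initial_union[OF assms(1)]
  unfolding pidx_def initial_union_def[symmetric]
  by (intro sorted_wrt_nth_less[of "(<)"]) auto

end

lemma ordered_partition_permutes_image:
  assumes op: "ordered_partition N n lam I" and \<sigma>: "\<sigma> permutes {1..n}"
  shows "ordered_partition N n lam (\<lambda>k. \<sigma> ` I k)"
proof -
  have inj: "inj \<sigma>" by (rule permutes_inj[OF \<sigma>])
  have "(\<Union>k\<in>{1..N}. \<sigma> ` I k) = \<sigma> ` (\<Union>k\<in>{1..N}. I k)" by auto
  then show ?thesis
    using op permutes_image[OF \<sigma>] unfolding ordered_partition_def
    by (auto simp: card_image[OF inj_on_subset[OF inj]] image_Int[OF inj, symmetric]
        dest: image_mono[of _ "{1..n}" \<sigma>])
qed

section \<open>Clearing the denominators of \<open>W\<^sub>I\<close>\<close>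

lemma sym_permsD: "\<pi> \<in> sym_perms N lam \<Longrightarrow> k \<in> {1..N-1} \<Longrightarrow> \<pi> k permutes {1..lamsum lam k}"
  by (simp add: sym_perms_def)

lemma sym_perms_compose_bij:
  assumes "\<rho> \<in> sym_perms N lam"
  shows "bij_betw (\<lambda>\<pi> k. \<rho> k \<circ> \<pi> k) (sym_perms N lam) (sym_perms N lam)"
proof (rule bij_betwI[where g = "\<lambda>\<pi> k. inv (\<rho> k) \<circ> \<pi> k"])
  have \<rho>: "\<rho> k permutes {1..lamsum lam k}" if "k \<in> {1..N-1}" for k
    using assms that by (simp add: sym_perms_def)
  have \<rho>_id: "\<rho> k = id" if "k \<notin> {1..N-1}" for k
    using assms that by (simp add: sym_perms_def)
  show "(\<lambda>\<pi> k. \<rho> k \<circ> \<pi> k) \<in> sym_perms N lam \<rightarrow> sym_perms N lam"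
    using \<rho> \<rho>_id by (auto simp: sym_perms_def intro: permutes_compose)
  show "(\<lambda>\<pi> k. inv (\<rho> k) \<circ> \<pi> k) \<in> sym_perms N lam \<rightarrow> sym_perms N lam"
    using \<rho> \<rho>_id by (auto simp: sym_perms_def intro: permutes_compose permutes_inv)
  have inv: "inv (\<rho> k) (\<rho> k a) = a \<and> \<rho> k (inv (\<rho> k) a) = a" for k a
    using permutes_inverses[OF \<rho>] \<rho>_id by (cases "k \<in> {1..N-1}") simp_all
  then show "(\<lambda>k. inv (\<rho> k) \<circ> (\<rho> k \<circ> \<pi> k)) = \<pi>" "(\<lambda>k. \<rho> k \<circ> (inv (\<rho> k) \<circ> \<pi> k)) = \<pi>" for \<pi>
    by (simp_all add: fun_eq_iff)
qed

definition offdiag :: "nat \<Rightarrow> (nat \<times> nat) set" where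
  "offdiag m = {(a, b). a \<in> {1..m} \<and> b \<in> {1..m} \<and> a \<noteq> b}"

definition below_diag :: "nat \<Rightarrow> (nat \<times> nat) set" where
  "below_diag m = {(a, b). a \<in> {1..m} \<and> b \<in> {1..m} \<and> a < b}"

lemma finite_offdiag: "finite (offdiag m)"
  by (rule finite_subset[of _ "{1..m} \<times> {1..m}"]) (auto simp: offdiag_def)

lemma finite_below_diag: "finite (below_diag m)"
  by (rule finite_subset[of _ "{1..m} \<times> {1..m}"]) (auto simp: below_diag_def)

lemma prod_offdiag_permute:
  assumes "p permutes {1..m}"
  shows "(\<Prod>(a, b)\<in>offdiag m. f (p a) (p b)) = (\<Prod>(a, b)\<in>offdiag m. f a b)"
proof -
  have p: "p a \<in> {1..m} \<longleftrightarrow> a \<in> {1..m}" "inv p a \<in> {1..m} \<longleftrightarrow> a \<in> {1..m}" for a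
    using permutes_in_image[OF assms] permutes_in_image[OF permutes_inv[OF assms]] by blast+
  have "bij_betw (map_prod p p) (offdiag m) (offdiag m)"
  proof (rule bij_betwI[where g = "map_prod (inv p) (inv p)"])
    show "map_prod p p \<in> offdiag m \<rightarrow> offdiag m" "map_prod (inv p) (inv p) \<in> offdiag m \<rightarrow> offdiag m"
      using p permutes_inj[OF assms] permutes_inj[OF permutes_inv[OF assms]]
      by (auto simp: offdiag_def simp del: atLeastAtMost_iff dest: injD)
    show "map_prod (inv p) (inv p) (map_prod p p q) = q"
      and "map_prod p p (map_prod (inv p) (inv p) q) = q" for q
      using assms by (simp_all add: permutes_inverses map_prod_def split_beta)
  qed
  from prod.reindex_bij_betw[OF this, of "\<lambda>(a, b). f a b"] show ?thesis
    by (simp add: case_prod_map_prod)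
qed

lemma prod_offdiag_rows:
  "(\<Prod>(a, b)\<in>offdiag m. f a b) = (\<Prod>a\<in>{1..m}. (\<Prod>b\<in>{a+1..m}. f a b) * (\<Prod>b\<in>{1..a-1}. f a b))"
proof -
  have "offdiag m = Sigma {1..m} (\<lambda>a. {a+1..m} \<union> {1..a-1})" by (auto simp: offdiag_def)
  then have "(\<Prod>(a, b)\<in>offdiag m. f a b) = (\<Prod>a\<in>{1..m}. \<Prod>b\<in>{a+1..m} \<union> {1..a-1}. f a b)"
    by (simp add: prod.Sigma)
  also have "\<dots> = (\<Prod>a\<in>{1..m}. (\<Prod>b\<in>{a+1..m}. f a b) * (\<Prod>b\<in>{1..a-1}. f a b))"
    by (intro prod.cong refl prod.union_disjoint) auto
  finally show ?thesis .
qed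

lemma prod_offdiag_antisym:
  fixes f :: "nat \<Rightarrow> nat \<Rightarrow> 'a :: comm_ring_1"
  assumes "\<And>a b. f b a = - f a b"
  shows "(\<Prod>(a, b)\<in>offdiag m. f a b) = (\<Prod>(a, b)\<in>below_diag m. - ((f a b)^2))"
proof -
  have split: "offdiag m = below_diag m \<union> prod.swap ` below_diag m"
    by (auto simp: offdiag_def below_diag_def image_iff)
  have "(\<Prod>(a, b)\<in>offdiag m. f a b)
      = (\<Prod>(a, b)\<in>below_diag m. f a b) * (\<Prod>(a, b)\<in>prod.swap ` below_diag m. f a b)"
    unfolding split
    by (intro prod.union_disjoint finite_below_diag finite_imageI) (auto simp: below_diag_def)
  also have "(\<Prod>(a, b)\<in>prod.swap ` below_diag m. f a b) = (\<Prod>(a, b)\<in>below_diag m. f b a)"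
    by (subst prod.reindex) (auto simp: inj_on_def)
  also have "\<dots> = (\<Prod>(a, b)\<in>below_diag m. - f a b)"
    by (rule prod.cong[OF refl], clarify, rule assms)
  finally show ?thesis
    by (simp add: prod.distrib[symmetric] split_beta power2_eq_square)
qed

text \<open>\<open>U_cleared N lam I T h\<close> is \<open>U\<^sub>I\<close> multiplied by \<open>\<Prod>\<^sub>k \<Prod>\<^sub>a\<^sub>\<noteq>\<^sub>b (t^(k)_a - t^(k)_b)\<close>, which
  cancels its denominators \<open>1 - t^(k)_b / t^(k)_a\<close>; \<open>U_cleared_row lam I T h k a\<close> is the factor
  of row \<open>a\<close> on level \<open>k\<close>. Here \<open>T k a\<close> stands for \<open>t^(k)_a\<close> on all levels \<open>k \<le> N\<close>, so that
  \<open>T N a = z_a\<close>.\<close>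

definition U_cleared_row ::
    "(nat \<Rightarrow> nat) \<Rightarrow> (nat \<Rightarrow> nat set) \<Rightarrow> (nat \<Rightarrow> nat \<Rightarrow> complex) \<Rightarrow> complex \<Rightarrow> nat \<Rightarrow> nat \<Rightarrow> complex" where
  "U_cleared_row lam I T h k a =
     (\<Prod>c\<in>{c\<in>{1..lamsum lam (k+1)}. pidx I (k+1) c < pidx I k a}. 1 - h * T (k+1) c / T k a) *
     (\<Prod>c\<in>{c\<in>{1..lamsum lam (k+1)}. pidx I k a < pidx I (k+1) c}. 1 - T (k+1) c / T k a) *
     (\<Prod>b\<in>{a+1..lamsum lam k}. T k a - h * T k b) *
     (\<Prod>b\<in>{1..a-1}. T k a - T k b)"

definition U_cleared ::
    "nat \<Rightarrow> (nat \<Rightarrow> nat) \<Rightarrow> (nat \<Rightarrow> nat set) \<Rightarrow> (nat \<Rightarrow> nat \<Rightarrow> complex) \<Rightarrow> complex \<Rightarrow> complex" where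
  "U_cleared N lam I T h = (\<Prod>k\<in>{1..N-1}. \<Prod>a\<in>{1..lamsum lam k}. U_cleared_row lam I T h k a)"

definition level_diffs :: "nat \<Rightarrow> (nat \<Rightarrow> nat) \<Rightarrow> (nat \<Rightarrow> nat \<Rightarrow> complex) \<Rightarrow> complex" where
  "level_diffs N lam t = (\<Prod>k\<in>{1..N-1}. \<Prod>(a, b)\<in>offdiag (lamsum lam k). t k a - t k b)"

lemma level_diffs_permute:
  assumes "\<pi> \<in> sym_perms N lam"
  shows "level_diffs N lam (\<lambda>k a. t k (\<pi> k a)) = level_diffs N lam t"
  unfolding level_diffs_def
proof (rule prod.cong[OF refl])
  fix k assume "k \<in> {1..N-1}"
  from prod_offdiag_permute[OF sym_permsD[OF assms this], of "\<lambda>a b. t k a - t k b"]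
  show "(\<Prod>(a, b)\<in>offdiag (lamsum lam k). t k (\<pi> k a) - t k (\<pi> k b))
      = (\<Prod>(a, b)\<in>offdiag (lamsum lam k). t k a - t k b)" by simp
qed

lemma U_fun_mult_level_diffs:
  assumes inj: "\<forall>k\<in>{1..N-1}. inj_on (t k) {1..lamsum lam k}"
    and nonzero: "\<forall>k\<in>{1..N-1}. \<forall>a\<in>{1..lamsum lam k}. t k a \<noteq> 0"
  shows "U_fun N lam I t z h * level_diffs N lam t = U_cleared N lam I (tvar N t z) h"
proof -
  have tvar: "tvar N t z k = t k" if "k \<in> {1..N-1}" for k
    using that by (auto simp: tvar_def fun_eq_iff)
  have "(1 - h * t k b / t k a) / (1 - t k b / t k a) * (t k a - t k b) = t k a - h * t k b"
    if "k \<in> {1..N-1}" "a \<in> {1..lamsum lam k}" "b \<in> {a+1..lamsum lam k}" for k a b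
  proof -
    have "t k a \<noteq> 0" "t k a \<noteq> t k b"
      using nonzero inj_on_contraD[OF bspec[OF inj]] that by auto
    then show ?thesis by (simp add: field_simps)
  qed
  then have cleared: "(\<Prod>b\<in>{a+1..lamsum lam k}. (1 - h * t k b / t k a) / (1 - t k b / t k a)) *
      (\<Prod>b\<in>{a+1..lamsum lam k}. t k a - t k b) = (\<Prod>b\<in>{a+1..lamsum lam k}. t k a - h * t k b)"
    if "k \<in> {1..N-1}" "a \<in> {1..lamsum lam k}" for k a
    using that by (simp add: prod.distrib[symmetric])
  show ?thesis
    unfolding U_fun_def U_cleared_def U_cleared_row_def level_diffs_def prod_offdiag_rows
      prod.distrib[symmetric]
    by (intro prod.cong refl) (simp only: tvar cleared[symmetric] mult.assoc)
qed

lemma laurent_on_U_cleared: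
  assumes "finite V" "h \<in> V" "\<And>k a. k \<in> {1..N} \<Longrightarrow> a \<in> {1..lamsum lam k} \<Longrightarrow> f k a \<in> V"
  shows "laurent_on V (\<lambda>x. U_cleared N lam I (\<lambda>k a. x (f k a)) (x h))"
  unfolding U_cleared_def U_cleared_row_def using assms
  by (intro laurent_on_prod laurent_on_mult laurent_on_diff laurent_on_divide_var laurent_on_const
      laurent_on_var) auto

lemma U_cleared_eq_0_if_level_eq:
  assumes "k \<in> {1..N-1}" "a \<in> {1..lamsum lam k}" "b \<in> {1..lamsum lam k}" "a < b" "T k a = T k b"
  shows "U_cleared N lam I T h = 0"
proof -
  have "(\<Prod>c\<in>{1..b-1}. T k b - T k c) = 0"
    using assms(2,4,5) by (intro prod_zero[OF finite_atLeastAtMost] bexI[of _ a]) auto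
  then show ?thesis
    unfolding U_cleared_def U_cleared_row_def using assms(1,3)
    by (intro prod_zero[OF finite_atLeastAtMost] bexI[of _ k] bexI[of _ b]) simp_all
qed

datatype weight_var = TV nat nat | ZV nat | HV

definition weight_vars :: "nat \<Rightarrow> (nat \<Rightarrow> nat) \<Rightarrow> weight_var set" where
  "weight_vars N lam =
     (\<lambda>(k, a). TV k a) ` (SIGMA k:{1..N-1}. {1..lamsum lam k}) \<union> ZV ` {1..lamsum lam N} \<union> {HV}"

lemma finite_weight_vars: "finite (weight_vars N lam)"
  unfolding weight_vars_def by (intro finite_UnI finite_imageI finite_SigmaI) auto

lemma weight_vars_iff [simp]:
  "TV k a \<in> weight_vars N lam \<longleftrightarrow> k \<in> {1..N-1} \<and> a \<in> {1..lamsum lam k}"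
  "ZV c \<in> weight_vars N lam \<longleftrightarrow> c \<in> {1..lamsum lam N}"
  "HV \<in> weight_vars N lam"
  unfolding weight_vars_def by (auto intro: rev_image_eqI[of "(k, a)"])

definition level_var :: "nat \<Rightarrow> (nat \<Rightarrow> nat \<Rightarrow> nat) \<Rightarrow> nat \<Rightarrow> nat \<Rightarrow> weight_var" where
  "level_var N \<pi> k a = (if k = N then ZV a else TV k (\<pi> k a))"

lemma level_var_in_weight_vars:
  assumes "\<pi> \<in> sym_perms N lam" "k \<in> {1..N}" "a \<in> {1..lamsum lam k}"
  shows "level_var N \<pi> k a \<in> weight_vars N lam"
  using assms permutes_in_image[OF sym_permsD[OF assms(1)], of k a]
  by (auto simp: level_var_def)

definition W_cleared ::
    "nat \<Rightarrow> (nat \<Rightarrow> nat) \<Rightarrow> (nat \<Rightarrow> nat set) \<Rightarrow> (weight_var \<Rightarrow> complex) \<Rightarrow> complex" where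
  "W_cleared N lam I x = (1 - x HV) ^ (\<Sum>k=1..N-1. lamsum lam k) *
     (\<Sum>\<pi>\<in>sym_perms N lam. U_cleared N lam I (\<lambda>k a. x (level_var N \<pi> k a)) (x HV))"

lemma W_fun_mult_level_diffs:
  assumes "x \<in> torus (weight_vars N lam)"
    and inj: "\<forall>k\<in>{1..N-1}. inj_on (\<lambda>a. x (TV k a)) {1..lamsum lam k}"
  shows "W_fun N lam I (\<lambda>k a. x (TV k a)) (\<lambda>c. x (ZV c)) (x HV) * level_diffs N lam (\<lambda>k a. x (TV k a))
      = W_cleared N lam I x"
proof -
  have "U_fun N lam I (\<lambda>k a. x (TV k (\<pi> k a))) (\<lambda>c. x (ZV c)) (x HV) * level_diffs N lam (\<lambda>k a. x (TV k a))
      = U_cleared N lam I (\<lambda>k a. x (level_var N \<pi> k a)) (x HV)" if \<pi>: "\<pi> \<in> sym_perms N lam" for \<pi>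
  proof -
    have inj_\<pi>: "inj_on (\<lambda>a. x (TV k (\<pi> k a))) {1..lamsum lam k}" if "k \<in> {1..N-1}" for k
    proof -
      note p = sym_permsD[OF \<pi> that]
      have "inj_on ((\<lambda>a. x (TV k a)) \<circ> \<pi> k) {1..lamsum lam k}"
        using inj that permutes_inj_on[OF p] permutes_image[OF p] by (intro comp_inj_on) auto
      then show ?thesis by (simp add: comp_def)
    qed
    have nonzero: "x (TV k (\<pi> k a)) \<noteq> 0" if "k \<in> {1..N-1}" "a \<in> {1..lamsum lam k}" for k a
      using assms(1) that permutes_in_image[OF sym_permsD[OF \<pi> that(1)], of a]
      by (auto simp: torus_def)
    have "U_fun N lam I (\<lambda>k a. x (TV k (\<pi> k a))) (\<lambda>c. x (ZV c)) (x HV) *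
        level_diffs N lam (\<lambda>k a. x (TV k (\<pi> k a)))
        = U_cleared N lam I (tvar N (\<lambda>k a. x (TV k (\<pi> k a))) (\<lambda>c. x (ZV c))) (x HV)"
      using inj_\<pi> nonzero by (intro U_fun_mult_level_diffs) auto
    moreover have "tvar N (\<lambda>k a. x (TV k (\<pi> k a))) (\<lambda>c. x (ZV c)) = (\<lambda>k a. x (level_var N \<pi> k a))"
      by (auto simp: tvar_def level_var_def fun_eq_iff)
    ultimately show ?thesis
      using level_diffs_permute[OF \<pi>, of "\<lambda>k a. x (TV k a)"] by simp
  qed
  then show ?thesis
    unfolding W_fun_def W_cleared_def by (simp add: sum_distrib_right mult.assoc)
qed

lemma laurent_on_W_cleared: "laurent_on (weight_vars N lam) (W_cleared N lam I)"
  unfolding W_cleared_def[abs_def]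
  by (intro laurent_on_mult laurent_on_power laurent_on_diff laurent_on_const laurent_on_var
      laurent_on_sum laurent_on_U_cleared finite_weight_vars level_var_in_weight_vars) auto

lemma W_cleared_eq_0_if_level_eq:
  assumes "k \<in> {1..N-1}" "a \<in> {1..lamsum lam k}" "b \<in> {1..lamsum lam k}" "a \<noteq> b"
    and "x (TV k a) = x (TV k b)"
  shows "W_cleared N lam I x = 0"
proof -
  have "U_cleared N lam I (\<lambda>k a. x (level_var N \<pi> k a)) (x HV) = 0" if \<pi>: "\<pi> \<in> sym_perms N lam" for \<pi>
  proof -
    note p = sym_permsD[OF \<pi> assms(1)]
    define a' where "a' = inv (\<pi> k) a"
    define b' where "b' = inv (\<pi> k) b"
    have "a' \<in> {1..lamsum lam k}" "b' \<in> {1..lamsum lam k}" "a' \<noteq> b'"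
      using assms(2-4) permutes_in_image[OF permutes_inv[OF p]] permutes_inverses(1)[OF p]
      unfolding a'_def b'_def by metis+
    moreover have "x (level_var N \<pi> k a') = x (level_var N \<pi> k b')"
      using assms(1,5) permutes_inverses(1)[OF p] by (auto simp: level_var_def a'_def b'_def)
    ultimately show ?thesis
      using assms(1) U_cleared_eq_0_if_level_eq
      by (metis linorder_neqE_nat)
  qed
  then show ?thesis by (simp add: W_cleared_def)
qed

lemma W_cleared_swap:
  assumes "k \<in> {1..N-1}" "a \<in> {1..lamsum lam k}" "b \<in> {1..lamsum lam k}"
  shows "W_cleared N lam I (\<lambda>v. x (transpose (TV k a) (TV k b) v)) = W_cleared N lam I x"
proof -
  define \<rho> where "\<rho> l = (if l = k then transpose a b else id)" for l
  have \<rho>: "\<rho> \<in> sym_perms N lam"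
    unfolding sym_perms_def \<rho>_def using assms by (auto intro: permutes_swap_id)
  have "transpose (TV k a) (TV k b) (level_var N \<pi> l c) = level_var N (\<lambda>l. \<rho> l \<circ> \<pi> l) l c" for \<pi> l c
    using assms(1) by (auto simp: level_var_def \<rho>_def transpose_def)
  moreover have "transpose (TV k a) (TV k b) HV = HV" by (simp add: transpose_def)
  ultimately have "W_cleared N lam I (\<lambda>v. x (transpose (TV k a) (TV k b) v))
      = (1 - x HV) ^ (\<Sum>k=1..N-1. lamsum lam k) *
        (\<Sum>\<pi>\<in>sym_perms N lam. U_cleared N lam I (\<lambda>l c. x (level_var N (\<lambda>l. \<rho> l \<circ> \<pi> l) l c)) (x HV))"
    unfolding W_cleared_def by (simp only:)
  also have "\<dots> = W_cleared N lam I x"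
    unfolding W_cleared_def
    using sum.reindex_bij_betw[OF sym_perms_compose_bij[OF \<rho>],
        of "\<lambda>\<pi>. U_cleared N lam I (\<lambda>l c. x (level_var N \<pi> l c)) (x HV)"]
    by simp
  finally show ?thesis .
qed

lemma level_diffs_eq_prod_squares:
  "level_diffs N lam t = (-1) ^ card (SIGMA k:{1..N-1}. below_diag (lamsum lam k)) *
     (\<Prod>(k, a, b)\<in>(SIGMA k:{1..N-1}. below_diag (lamsum lam k)). (t k a - t k b)^2)"
proof -
  have "level_diffs N lam t = (\<Prod>k\<in>{1..N-1}. \<Prod>(a, b)\<in>below_diag (lamsum lam k). - ((t k a - t k b)^2))"
    unfolding level_diffs_def by (intro prod.cong refl prod_offdiag_antisym) simp
  also have "\<dots> = (\<Prod>(k, a, b)\<in>(SIGMA k:{1..N-1}. below_diag (lamsum lam k)). - ((t k a - t k b)^2))"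
    by (subst prod.Sigma) (auto simp: finite_below_diag split_beta)
  also have "\<dots> = (\<Prod>i\<in>(SIGMA k:{1..N-1}. below_diag (lamsum lam k)).
      (-1) * (\<lambda>(k, a, b). (t k a - t k b)^2) i)"
    by (simp add: split_beta)
  finally show ?thesis
    by (simp only: prod.distrib prod_constant)
qed

lemma W_fun_laurent:
  "\<exists>L. laurent_on (weight_vars N lam) L \<and>
     (\<forall>x\<in>torus (weight_vars N lam). (\<forall>k\<in>{1..N-1}. inj_on (\<lambda>a. x (TV k a)) {1..lamsum lam k}) \<longrightarrow>
        W_fun N lam I (\<lambda>k a. x (TV k a)) (\<lambda>c. x (ZV c)) (x HV) = L x)"
proof -
  let ?V = "weight_vars N lam"
  define A where "A = (SIGMA k:{1..N-1}. below_diag (lamsum lam k))"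
  define pu where "pu = (\<lambda>(k, a, b :: nat). TV k a)"
  define pw where "pw = (\<lambda>(k, a :: nat, b). TV k b)"
  have finite_A: "finite A"
    unfolding A_def by (intro finite_SigmaI finite_below_diag) simp
  have A: "\<forall>i\<in>A. pu i \<in> ?V \<and> pw i \<in> ?V \<and> pu i \<noteq> pw i"
    by (auto simp: A_def pu_def pw_def below_diag_def)
  have inj: "inj_on (\<lambda>i. {pu i, pw i}) A"
    by (auto simp: inj_on_def A_def pu_def pw_def below_diag_def doubleton_eq_iff)
  have "\<exists>R. laurent_on ?V R \<and> (\<forall>x\<in>torus ?V. W_cleared N lam I x = (x (pu i) - x (pw i))^2 * R x)"
    if "i \<in> A" for i
  proof -
    obtain k a b where i: "i = (k, a, b)" and k: "k \<in> {1..N-1}"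
      and ab: "a \<in> {1..lamsum lam k}" "b \<in> {1..lamsum lam k}" "a < b"
      using \<open>i \<in> A\<close> by (auto simp: A_def below_diag_def)
    show ?thesis
      unfolding i pu_def pw_def split
      using k ab W_cleared_eq_0_if_level_eq[OF k ab(1,2)] W_cleared_swap[OF k ab(1,2)]
      by (intro laurent_on_factor_diff_square finite_weight_vars laurent_on_W_cleared) auto
  qed
  then obtain R where R: "laurent_on ?V R"
    "\<forall>x\<in>torus ?V. W_cleared N lam I x = (\<Prod>i\<in>A. (x (pu i) - x (pw i))^2) * R x"
    using laurent_on_factor_prod_diff_squares[OF finite_weight_vars finite_A A inj laurent_on_W_cleared]
    by blast
  show ?thesis
  proof (intro exI[of _ "\<lambda>x. R x / (-1) ^ card A"] conjI ballI impI)
    show "laurent_on ?V (\<lambda>x. R x / (-1) ^ card A)"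
      using laurent_on_mult[OF R(1) laurent_on_const] by (simp add: divide_inverse)
    fix x assume x: "x \<in> torus ?V" and inj: "\<forall>k\<in>{1..N-1}. inj_on (\<lambda>a. x (TV k a)) {1..lamsum lam k}"
    let ?P = "\<Prod>i\<in>A. (x (pu i) - x (pw i))^2"
    have "x (pu i) \<noteq> x (pw i)" if "i \<in> A" for i
      using that inj_on_contraD[OF bspec[OF inj]] by (auto simp: A_def pu_def pw_def below_diag_def)
    then have "?P \<noteq> 0"
      using finite_A by simp
    moreover have "level_diffs N lam (\<lambda>k a. x (TV k a)) = (-1) ^ card A * ?P"
      unfolding level_diffs_eq_prod_squares A_def pu_def pw_def by (simp add: split_beta)
    ultimately show "W_fun N lam I (\<lambda>k a. x (TV k a)) (\<lambda>c. x (ZV c)) (x HV) = R x / (-1) ^ card A"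
      using W_fun_mult_level_diffs[OF x inj, of I] R(2) x by (auto simp: field_simps)
  qed
qed

section \<open>The substitution \<open>t = z\<^sub>J\<close>\<close>

lemma E_fun_permute:
  assumes "\<pi> \<in> sym_perms N lam"
  shows "E_fun N lam (\<lambda>k a. t k (\<pi> k a)) h = E_fun N lam t h"
  unfolding E_fun_def
proof (rule prod.cong[OF refl])
  fix k assume "k \<in> {1..N-1}"
  note bij = permutes_imp_bij[OF sym_permsD[OF assms this]]
  show "(\<Prod>a\<in>{1..lamsum lam k}. \<Prod>b\<in>{1..lamsum lam k}. 1 - h * t k (\<pi> k b) / t k (\<pi> k a))
      = (\<Prod>a\<in>{1..lamsum lam k}. \<Prod>b\<in>{1..lamsum lam k}. 1 - h * t k b / t k a)"
    using prod.reindex_bij_betw[OF bij, of "\<lambda>a. \<Prod>b\<in>{1..lamsum lam k}. 1 - h * t k b / t k a"]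
      prod.reindex_bij_betw[OF bij, of "\<lambda>b. 1 - h * t k b / t k _"]
    by simp
qed

lemma eventually_prod_ne_0:
  assumes "finite A" "\<forall>i\<in>A. eventually (\<lambda>e. f i e \<noteq> 0) F"
  shows "eventually (\<lambda>e. (\<Prod>i\<in>A. f i e) \<noteq> (0 :: complex)) F"
  using eventually_ball_finite[OF assms] by eventually_elim (simp add: assms(1) prod_zero_iff)

lemma eventually_E_fun_ne_0:
  assumes "\<forall>k\<in>{1..N-1}. \<forall>a\<in>{1..lamsum lam k}. t k a \<noteq> 0"
  shows "eventually (\<lambda>e. E_fun N lam t (h + e) \<noteq> 0) (at 0)"
proof -
  have "eventually (\<lambda>e. 1 - (h + e) * t k b / t k a \<noteq> 0) (at 0)"
    if "k \<in> {1..N-1}" "a \<in> {1..lamsum lam k}" "b \<in> {1..lamsum lam k}" for k a b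
  proof -
    have "eventually (\<lambda>e. (1 - h * (t k b / t k a)) + e * (- (t k b / t k a)) \<noteq> 0) (at 0)"
      using assms that by (intro eventually_affine_ne_zero) auto
    then show ?thesis
      by eventually_elim (simp add: divide_inverse algebra_simps)
  qed
  then show ?thesis
    unfolding E_fun_def by (intro eventually_prod_ne_0 finite_atLeastAtMost ballI)
qed

lemma level_diffs_Sigma:
  "level_diffs N lam t = (\<Prod>(k, a, b)\<in>(SIGMA k:{1..N-1}. offdiag (lamsum lam k)). t k a - t k b)"
  unfolding level_diffs_def by (subst prod.Sigma) (auto simp: finite_offdiag split_beta)

lemma U_cleared_eq_0_if_reappears_after:
  assumes "k \<in> {1..N-1}" "a \<in> {1..lamsum lam k}" "c \<in> {1..lamsum lam (k+1)}"
    and "pidx I k a < pidx I (k+1) c" "T (k+1) c = T k a" "T k a \<noteq> 0"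
  shows "U_cleared N lam I T h = 0"
proof -
  have "(\<Prod>c\<in>{c\<in>{1..lamsum lam (k+1)}. pidx I k a < pidx I (k+1) c}. 1 - T (k+1) c / T k a) = 0"
    using assms(3-6) by (intro prod_zero bexI[of _ c]) auto
  then show ?thesis
    unfolding U_cleared_def U_cleared_row_def using assms(1,2)
    by (intro prod_zero[OF finite_atLeastAtMost] bexI[of _ k] bexI[of _ a]) simp_all
qed

definition U_cofactor_row :: "(nat \<Rightarrow> nat) \<Rightarrow> (nat \<Rightarrow> nat set) \<Rightarrow> (nat \<Rightarrow> nat) \<Rightarrow>
    (nat \<Rightarrow> nat \<Rightarrow> complex) \<Rightarrow> complex \<Rightarrow> nat \<Rightarrow> nat \<Rightarrow> complex" where
  "U_cofactor_row lam I g T h k a =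
     (\<Prod>c\<in>{c\<in>{1..lamsum lam (k+1)}. pidx I (k+1) c < pidx I k a} - g ` {1..a-1}.
        1 - h * T (k+1) c / T k a) *
     (\<Prod>c\<in>{c\<in>{1..lamsum lam (k+1)}. pidx I k a < pidx I (k+1) c}. 1 - T (k+1) c / T k a) *
     T k a ^ (lamsum lam k - a) *
     (\<Prod>b\<in>{1..a-1}. T k a - T k b)"

definition U_cofactor :: "nat \<Rightarrow> (nat \<Rightarrow> nat) \<Rightarrow> (nat \<Rightarrow> nat set) \<Rightarrow> (nat \<Rightarrow> nat \<Rightarrow> nat) \<Rightarrow>
    (nat \<Rightarrow> nat \<Rightarrow> complex) \<Rightarrow> complex \<Rightarrow> complex" where
  "U_cofactor N lam I g T h =
     (\<Prod>k\<in>{1..N-1}. \<Prod>a\<in>{1..lamsum lam k}. U_cofactor_row lam I (g k) T h k a)"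

lemma laurent_on_U_cofactor:
  assumes "finite V" "h \<in> V" "\<And>k a. k \<in> {1..N} \<Longrightarrow> a \<in> {1..lamsum lam k} \<Longrightarrow> f k a \<in> V"
  shows "laurent_on V (\<lambda>x. U_cofactor N lam I g (\<lambda>k a. x (f k a)) (x h))"
  unfolding U_cofactor_def U_cofactor_row_def using assms
  by (intro laurent_on_prod laurent_on_mult laurent_on_diff laurent_on_divide_var laurent_on_const
      laurent_on_power laurent_on_var) auto

text \<open>If every \<open>t^(k)_b\<close> with \<open>b < a\<close> reappears as \<open>t^(k+1)_(g b)\<close> at a position \<open>g b\<close> that
  precedes \<open>a\<close> in the order given by \<open>I\<close>, then row \<open>a\<close> of level \<open>k\<close> contains all factors
  \<open>1 - h t^(k)_b / t^(k)_a\<close> of \<open>E\<close>: for \<open>b > a\<close> they come from \<open>t^(k)_a - h t^(k)_b\<close>, for \<open>b = a\<close> it is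
  the factor \<open>1 - h\<close>, and for \<open>b < a\<close> they are among the factors \<open>1 - h t^(k+1)_c / t^(k)_a\<close>.\<close>

lemma U_cleared_row_factor:
  fixes T :: "nat \<Rightarrow> nat \<Rightarrow> complex"
  assumes "a \<in> {1..lamsum lam k}" "T k a \<noteq> 0" "inj_on g {1..a-1}"
    and "g ` {1..a-1} \<subseteq> {c\<in>{1..lamsum lam (k+1)}. pidx I (k+1) c < pidx I k a}"
    and "\<And>b. b \<in> {1..a-1} \<Longrightarrow> T (k+1) (g b) = T k b"
  shows "(1 - h) * U_cleared_row lam I T h k a
    = (\<Prod>b\<in>{1..lamsum lam k}. 1 - h * T k b / T k a) * U_cofactor_row lam I g T h k a"
proof -
  let ?E = "\<lambda>b. 1 - h * T k b / T k a"
  let ?f = "\<lambda>c. 1 - h * T (k+1) c / T k a"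
  let ?low = "{c\<in>{1..lamsum lam (k+1)}. pidx I (k+1) c < pidx I k a}"
  have low: "(\<Prod>c\<in>?low. ?f c) = (\<Prod>c\<in>?low - g ` {1..a-1}. ?f c) * (\<Prod>b\<in>{1..a-1}. ?E b)"
  proof -
    have "(\<Prod>c\<in>?low. ?f c) = (\<Prod>c\<in>?low - g ` {1..a-1}. ?f c) * (\<Prod>c\<in>g ` {1..a-1}. ?f c)"
      by (rule prod.subset_diff[OF assms(4)]) simp
    also have "(\<Prod>c\<in>g ` {1..a-1}. ?f c) = (\<Prod>b\<in>{1..a-1}. ?f (g b))"
      by (rule prod.reindex_cong[OF assms(3) refl refl])
    also have "\<dots> = (\<Prod>b\<in>{1..a-1}. ?E b)"
      using assms(5) by (intro prod.cong) auto
    finally show ?thesis .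
  qed
  have "(\<Prod>b\<in>{a+1..lamsum lam k}. T k a - h * T k b) = (\<Prod>b\<in>{a+1..lamsum lam k}. T k a * ?E b)"
    using assms(2) by (intro prod.cong refl) (simp add: field_simps)
  then have up: "(\<Prod>b\<in>{a+1..lamsum lam k}. T k a - h * T k b)
      = T k a ^ (lamsum lam k - a) * (\<Prod>b\<in>{a+1..lamsum lam k}. ?E b)"
    by (simp add: prod.distrib)
  have "{1..lamsum lam k} = insert a ({a+1..lamsum lam k} \<union> {1..a-1})"
    using assms(1) by auto
  then have "(\<Prod>b\<in>{1..lamsum lam k}. ?E b) = ?E a * (\<Prod>b\<in>{a+1..lamsum lam k} \<union> {1..a-1}. ?E b)"
    by (simp only:) (rule prod.insert, auto)
  also have "(\<Prod>b\<in>{a+1..lamsum lam k} \<union> {1..a-1}. ?E b)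
      = (\<Prod>b\<in>{a+1..lamsum lam k}. ?E b) * (\<Prod>b\<in>{1..a-1}. ?E b)"
    by (rule prod.union_disjoint) auto
  finally have E: "(\<Prod>b\<in>{1..lamsum lam k}. ?E b)
      = (1 - h) * (\<Prod>b\<in>{a+1..lamsum lam k}. ?E b) * (\<Prod>b\<in>{1..a-1}. ?E b)"
    using assms(2) by (simp add: mult.assoc)
  show ?thesis
    unfolding U_cleared_row_def U_cofactor_row_def low up E by (simp only: ac_simps)
qed

lemma U_cleared_factor_E:
  assumes "\<forall>k\<in>{1..N-1}. \<forall>a\<in>{1..lamsum lam k}. T k a \<noteq> 0"
    and "\<And>k a. k \<in> {1..N-1} \<Longrightarrow> a \<in> {1..lamsum lam k} \<Longrightarrow> inj_on (g k) {1..a-1} \<and>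
       g k ` {1..a-1} \<subseteq> {c\<in>{1..lamsum lam (k+1)}. pidx I (k+1) c < pidx I k a} \<and>
       (\<forall>b\<in>{1..a-1}. T (k+1) (g k b) = T k b)"
  shows "(1 - h) ^ (\<Sum>k=1..N-1. lamsum lam k) * U_cleared N lam I T h
    = E_fun N lam T h * U_cofactor N lam I g T h"
proof -
  have power: "(1 - h) ^ (\<Sum>k=1..N-1. lamsum lam k) = (\<Prod>k\<in>{1..N-1}. \<Prod>a\<in>{1..lamsum lam k}. 1 - h)"
    by (simp add: power_sum)
  show ?thesis
    unfolding power U_cleared_def E_fun_def U_cofactor_def prod.distrib[symmetric]
    by (intro prod.cong refl U_cleared_row_factor) (use assms in auto)
qed

text \<open>In the variables \<open>point_vars n\<close>, \<open>None\<close> stands for \<open>h\<close> and \<open>Some i\<close> for \<open>z_i\<close>; the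
  substitution \<open>t^(k)_a = z_(j^(k)_a)\<close>, \<open>z_c \<mapsto> z_(\<sigma> c)\<close> is the renaming \<open>specialize J \<sigma>\<close>.\<close>

definition point_vars :: "nat \<Rightarrow> nat option set" where
  "point_vars n = insert None (Some ` {1..n})"

definition specialize :: "(nat \<Rightarrow> nat set) \<Rightarrow> (nat \<Rightarrow> nat) \<Rightarrow> weight_var \<Rightarrow> nat option" where
  "specialize J \<sigma> v = (case v of TV k a \<Rightarrow> Some (pidx J k a) | ZV c \<Rightarrow> Some (\<sigma> c) | HV \<Rightarrow> None)"

definition level_point ::
    "nat \<Rightarrow> (nat \<Rightarrow> nat set) \<Rightarrow> (nat \<Rightarrow> nat) \<Rightarrow> (nat \<Rightarrow> nat \<Rightarrow> nat) \<Rightarrow> nat \<Rightarrow> nat \<Rightarrow> nat" where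
  "level_point N J \<sigma> \<pi> k a = (if k = N then \<sigma> a else pidx J k (\<pi> k a))"

lemma specialize_level_var: "specialize J \<sigma> (level_var N \<pi> k a) = Some (level_point N J \<sigma> \<pi> k a)"
  by (simp add: specialize_def level_var_def level_point_def)

definition level_lift :: "nat \<Rightarrow> (nat \<Rightarrow> nat) \<Rightarrow> (nat \<Rightarrow> nat set) \<Rightarrow> (nat \<Rightarrow> nat) \<Rightarrow>
    (nat \<Rightarrow> nat \<Rightarrow> nat) \<Rightarrow> nat \<Rightarrow> nat \<Rightarrow> nat" where
  "level_lift N lam J \<sigma> \<pi> k b =
     inv_into {1..lamsum lam (k+1)} (level_point N J \<sigma> \<pi> (k+1)) (level_point N J \<sigma> \<pi> k b)"

definition reappears_earlier :: "nat \<Rightarrow> (nat \<Rightarrow> nat) \<Rightarrow> (nat \<Rightarrow> nat set) \<Rightarrow> (nat \<Rightarrow> nat set) \<Rightarrow>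
    (nat \<Rightarrow> nat) \<Rightarrow> (nat \<Rightarrow> nat \<Rightarrow> nat) \<Rightarrow> bool" where
  "reappears_earlier N lam I J \<sigma> \<pi> \<longleftrightarrow>
     (\<forall>k\<in>{1..N-1}. \<forall>a\<in>{1..lamsum lam k}. \<forall>c\<in>{1..lamsum lam (k+1)}.
        level_point N J \<sigma> \<pi> (k+1) c = level_point N J \<sigma> \<pi> k a \<longrightarrow> pidx I (k+1) c \<le> pidx I k a)"

definition specialized_cofactor :: "nat \<Rightarrow> (nat \<Rightarrow> nat) \<Rightarrow> (nat \<Rightarrow> nat set) \<Rightarrow> (nat \<Rightarrow> nat set) \<Rightarrow>
    (nat \<Rightarrow> nat) \<Rightarrow> (nat option \<Rightarrow> complex) \<Rightarrow> complex" where
  "specialized_cofactor N lam I J \<sigma> y = (\<Sum>\<pi>\<in>sym_perms N lam.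
     if reappears_earlier N lam I J \<sigma> \<pi>
     then U_cofactor N lam I (level_lift N lam J \<sigma> \<pi>)
       (\<lambda>k a. y (Some (level_point N J \<sigma> \<pi> k a))) (y None)
     else 0)"

context
  fixes N n :: nat and lam :: "nat \<Rightarrow> nat" and I J :: "nat \<Rightarrow> nat set" and \<sigma> :: "nat \<Rightarrow> nat"
  assumes opI: "ordered_partition N n lam I" and opJ: "ordered_partition N n lam J"
    and \<sigma>: "\<sigma> permutes {1..n}"
begin

lemma bij_betw_level_point:
  assumes \<pi>: "\<pi> \<in> sym_perms N lam" and k: "k \<in> {1..N}"
  shows "bij_betw (level_point N J \<sigma> \<pi> k) {1..lamsum lam k} (initial_union J k)"
proof (cases "k = N")
  case True
  then have "level_point N J \<sigma> \<pi> k = \<sigma>" by (simp add: fun_eq_iff level_point_def)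
  then show ?thesis
    using True permutes_imp_bij[OF \<sigma>] lamsum_N[OF opJ] initial_union_N[OF opJ] by simp
next
  case False
  then have "k \<in> {1..N-1}" using k by auto
  from bij_betw_trans[OF permutes_imp_bij[OF sym_permsD[OF \<pi> this]] bij_betw_pidx[OF opJ]]
  moreover have "level_point N J \<sigma> \<pi> k = pidx J k \<circ> \<pi> k"
    using False by (simp add: fun_eq_iff level_point_def)
  ultimately show ?thesis
    using k by simp
qed

lemma level_point_in:
  "\<pi> \<in> sym_perms N lam \<Longrightarrow> k \<in> {1..N} \<Longrightarrow> a \<in> {1..lamsum lam k} \<Longrightarrow> level_point N J \<sigma> \<pi> k a \<in> {1..n}"
  using bij_betwE[OF bij_betw_level_point] initial_union_subset[OF opJ] by blast

lemma pidx_J_in: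
  assumes "k \<in> {1..N-1}" "a \<in> {1..lamsum lam k}"
  shows "pidx J k a \<in> {1..n}"
proof -
  have "k \<le> N" using assms(1) by auto
  then show ?thesis
    using bij_betwE[OF bij_betw_pidx[OF opJ]] initial_union_subset[OF opJ] assms(2) by blast
qed

lemma inj_on_pidx_J: "k \<in> {1..N-1} \<Longrightarrow> inj_on (pidx J k) {1..lamsum lam k}"
  using bij_betw_imp_inj_on[OF bij_betw_pidx[OF opJ]] by auto

lemma
  assumes \<pi>: "\<pi> \<in> sym_perms N lam" and k: "k \<in> {1..N-1}" and b: "b \<in> {1..lamsum lam k}"
  shows level_lift_in: "level_lift N lam J \<sigma> \<pi> k b \<in> {1..lamsum lam (k+1)}"
    and level_point_level_lift:
      "level_point N J \<sigma> \<pi> (k+1) (level_lift N lam J \<sigma> \<pi> k b) = level_point N J \<sigma> \<pi> k b"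
proof -
  have k': "k \<in> {1..N}" "k + 1 \<in> {1..N}" using k by auto
  have "level_point N J \<sigma> \<pi> k b \<in> initial_union J k"
    using bij_betwE[OF bij_betw_level_point[OF \<pi> k'(1)]] b by blast
  also have "\<dots> \<subseteq> initial_union J (k+1)" by (rule initial_union_mono[OF opJ]) simp
  also have "\<dots> = level_point N J \<sigma> \<pi> (k+1) ` {1..lamsum lam (k+1)}"
    using bij_betw_imp_surj_on[OF bij_betw_level_point[OF \<pi> k'(2)]] by simp
  finally have "level_point N J \<sigma> \<pi> k b \<in> level_point N J \<sigma> \<pi> (k+1) ` {1..lamsum lam (k+1)}" .
  then show "level_lift N lam J \<sigma> \<pi> k b \<in> {1..lamsum lam (k+1)}"
    and "level_point N J \<sigma> \<pi> (k+1) (level_lift N lam J \<sigma> \<pi> k b) = level_point N J \<sigma> \<pi> k b"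
    unfolding level_lift_def by (rule inv_into_into, rule f_inv_into_f)
qed

lemma level_lift_precedes:
  assumes \<pi>: "\<pi> \<in> sym_perms N lam" and earlier: "reappears_earlier N lam I J \<sigma> \<pi>"
    and k: "k \<in> {1..N-1}" and a: "a \<in> {1..lamsum lam k}"
  shows "inj_on (level_lift N lam J \<sigma> \<pi> k) {1..a-1}"
    and "level_lift N lam J \<sigma> \<pi> k ` {1..a-1} \<subseteq> {c\<in>{1..lamsum lam (k+1)}. pidx I (k+1) c < pidx I k a}"
proof -
  let ?p = "level_point N J \<sigma> \<pi>"
  let ?g = "level_lift N lam J \<sigma> \<pi>"
  show "inj_on (?g k) {1..a-1}"
  proof (rule inj_onI)
    fix b b' assume "b \<in> {1..a-1}" "b' \<in> {1..a-1}" and eq: "?g k b = ?g k b'"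
    then have "b \<in> {1..lamsum lam k}" "b' \<in> {1..lamsum lam k}" using a by auto
    moreover have "?p k b = ?p k b'" using level_point_level_lift[OF \<pi> k] eq calculation by metis
    moreover have "k \<in> {1..N}" using k by auto
    ultimately show "b = b'"
      using inj_onD[OF bij_betw_imp_inj_on[OF bij_betw_level_point[OF \<pi>]]] by blast
  qed
  show "?g k ` {1..a-1} \<subseteq> {c\<in>{1..lamsum lam (k+1)}. pidx I (k+1) c < pidx I k a}"
  proof (rule image_subsetI)
    fix b assume "b \<in> {1..a-1}"
    then have b: "b \<in> {1..lamsum lam k}" "b < a" using a by auto
    have "pidx I (k+1) (?g k b) \<le> pidx I k b"
      using earlier level_lift_in[OF \<pi> k b(1)] level_point_level_lift[OF \<pi> k b(1)] k b(1)
      unfolding reappears_earlier_def by blast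
    also have "pidx I k b < pidx I k a"
      using pidx_strict_mono[OF opI _ b(1) a b(2)] k by auto
    finally show "?g k b \<in> {c\<in>{1..lamsum lam (k+1)}. pidx I (k+1) c < pidx I k a}"
      using level_lift_in[OF \<pi> k b(1)] by simp
  qed
qed

lemma U_cleared_specialize:
  assumes \<pi>: "\<pi> \<in> sym_perms N lam" and y: "y \<in> torus (point_vars n)"
  shows "(1 - y None) ^ (\<Sum>k=1..N-1. lamsum lam k) *
      U_cleared N lam I (\<lambda>k a. y (Some (level_point N J \<sigma> \<pi> k a))) (y None)
    = E_fun N lam (\<lambda>k a. y (Some (pidx J k a))) (y None) *
      (if reappears_earlier N lam I J \<sigma> \<pi>
       then U_cofactor N lam I (level_lift N lam J \<sigma> \<pi>)
         (\<lambda>k a. y (Some (level_point N J \<sigma> \<pi> k a))) (y None)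
       else 0)"
proof -
  let ?p = "level_point N J \<sigma> \<pi>"
  let ?T = "\<lambda>k a. y (Some (?p k a))"
  have nonzero: "?T k a \<noteq> 0" if "k \<in> {1..N}" "a \<in> {1..lamsum lam k}" for k a
    using y level_point_in[OF \<pi> that] by (auto simp: torus_def point_vars_def)
  show ?thesis
  proof (cases "reappears_earlier N lam I J \<sigma> \<pi>")
    case True
    have "(1 - y None) ^ (\<Sum>k=1..N-1. lamsum lam k) * U_cleared N lam I ?T (y None)
        = E_fun N lam ?T (y None) * U_cofactor N lam I (level_lift N lam J \<sigma> \<pi>) ?T (y None)"
      using nonzero level_lift_precedes[OF \<pi> True] level_point_level_lift[OF \<pi>]
      by (intro U_cleared_factor_E) auto
    moreover have "E_fun N lam ?T (y None) = E_fun N lam (\<lambda>k a. y (Some (pidx J k (\<pi> k a)))) (y None)"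
      unfolding E_fun_def level_point_def by (intro prod.cong refl) auto
    ultimately show ?thesis
      using True E_fun_permute[OF \<pi>, of "\<lambda>k a. y (Some (pidx J k a))"] by simp
  next
    case False
    then obtain k a c where k: "k \<in> {1..N-1}" and a: "a \<in> {1..lamsum lam k}"
      and c: "c \<in> {1..lamsum lam (k+1)}" and "?p (k+1) c = ?p k a" "pidx I k a < pidx I (k+1) c"
      unfolding reappears_earlier_def by auto
    moreover have "k \<in> {1..N}" using k by auto
    ultimately have "U_cleared N lam I ?T (y None) = 0"
      using nonzero[of k a] by (intro U_cleared_eq_0_if_reappears_after) auto
    then show ?thesis using False by simp
  qed
qed

lemma W_cleared_specialize:
  assumes "y \<in> torus (point_vars n)"
  shows "W_cleared N lam I (\<lambda>v. y (specialize J \<sigma> v))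
    = E_fun N lam (\<lambda>k a. y (Some (pidx J k a))) (y None) * specialized_cofactor N lam I J \<sigma> y"
  unfolding W_cleared_def specialized_cofactor_def specialize_level_var sum_distrib_left
  using U_cleared_specialize[OF _ assms] by (simp add: specialize_def)

lemma laurent_on_specialized_cofactor:
  "laurent_on (point_vars n) (specialized_cofactor N lam I J \<sigma>)"
  unfolding specialized_cofactor_def[abs_def]
proof (rule laurent_on_sum)
  fix \<pi> assume \<pi>: "\<pi> \<in> sym_perms N lam"
  have "laurent_on (point_vars n) (\<lambda>y. U_cofactor N lam I (level_lift N lam J \<sigma> \<pi>)
      (\<lambda>k a. y (Some (level_point N J \<sigma> \<pi> k a))) (y None))"
    using level_point_in[OF \<pi>] by (intro laurent_on_U_cofactor) (auto simp: point_vars_def)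
  then show "laurent_on (point_vars n) (\<lambda>y. if reappears_earlier N lam I J \<sigma> \<pi>
      then U_cofactor N lam I (level_lift N lam J \<sigma> \<pi>)
        (\<lambda>k a. y (Some (level_point N J \<sigma> \<pi> k a))) (y None)
      else 0)"
    by (cases "reappears_earlier N lam I J \<sigma> \<pi>") (simp_all add: laurent_on_const)
qed

lemma specialize_in_point_vars: "v \<in> weight_vars N lam \<Longrightarrow> specialize J \<sigma> v \<in> point_vars n"
  using pidx_J_in permutes_in_image[OF \<sigma>] lamsum_N[OF opJ]
  by (cases v) (auto simp: specialize_def point_vars_def)

lemma specialize_torus:
  "y \<in> torus (point_vars n) \<Longrightarrow> (\<lambda>v. y (specialize J \<sigma> v)) \<in> torus (weight_vars N lam)"
  using specialize_in_point_vars by (auto simp: torus_def)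

lemma specialize_inj_on_levels:
  assumes "inj_on (\<lambda>i. y (Some i)) {1..n}"
  shows "\<forall>k\<in>{1..N-1}. inj_on (\<lambda>a. y (specialize J \<sigma> (TV k a))) {1..lamsum lam k}"
proof
  fix k assume k: "k \<in> {1..N-1}"
  have "inj_on ((\<lambda>i. y (Some i)) \<circ> pidx J k) {1..lamsum lam k}"
    using pidx_J_in[OF k] by (intro comp_inj_on inj_on_pidx_J[OF k] inj_on_subset[OF assms]) auto
  then show "inj_on (\<lambda>a. y (specialize J \<sigma> (TV k a))) {1..lamsum lam k}"
    by (simp add: specialize_def comp_def)
qed

lemma W_fun_specialize_laurent:
  "\<exists>L. laurent_on (point_vars n) L \<and>
     (\<forall>y\<in>torus (point_vars n). inj_on (\<lambda>i. y (Some i)) {1..n} \<longrightarrow>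
        W_fun N lam I (\<lambda>k a. y (Some (pidx J k a))) (\<lambda>c. y (Some (\<sigma> c))) (y None) = L y)"
proof -
  obtain L where L: "laurent_on (weight_vars N lam) L"
    "\<forall>x\<in>torus (weight_vars N lam). (\<forall>k\<in>{1..N-1}. inj_on (\<lambda>a. x (TV k a)) {1..lamsum lam k}) \<longrightarrow>
       W_fun N lam I (\<lambda>k a. x (TV k a)) (\<lambda>c. x (ZV c)) (x HV) = L x"
    using W_fun_laurent by blast
  show ?thesis
  proof (intro exI conjI ballI impI)
    show "laurent_on (point_vars n) (\<lambda>y. L (\<lambda>v. y (specialize J \<sigma> v)))"
      by (rule laurent_on_compose[OF finite_weight_vars _ specialize_in_point_vars L(1)])
        (simp add: point_vars_def)
    fix y assume "y \<in> torus (point_vars n)" "inj_on (\<lambda>i. y (Some i)) {1..n}"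
    from mp[OF bspec[OF L(2) specialize_torus[OF this(1)]] specialize_inj_on_levels[OF this(2)]]
    show "W_fun N lam I (\<lambda>k a. y (Some (pidx J k a))) (\<lambda>c. y (Some (\<sigma> c))) (y None)
        = L (\<lambda>v. y (specialize J \<sigma> v))"
      by (simp add: specialize_def)
  qed
qed

lemma W_fun_specialize_mult_level_diffs:
  assumes "y \<in> torus (point_vars n)" "inj_on (\<lambda>i. y (Some i)) {1..n}"
  shows "W_fun N lam I (\<lambda>k a. y (Some (pidx J k a))) (\<lambda>c. y (Some (\<sigma> c))) (y None) *
      level_diffs N lam (\<lambda>k a. y (Some (pidx J k a)))
    = E_fun N lam (\<lambda>k a. y (Some (pidx J k a))) (y None) * specialized_cofactor N lam I J \<sigma> y"
  using W_fun_mult_level_diffs[OF specialize_torus[OF assms(1)] specialize_inj_on_levels[OF assms(2)], of I]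
    W_cleared_specialize[OF assms(1)]
  by (simp add: specialize_def)

lemma W_fun_specialize_factor_E:
  "\<exists>Q. laurent_on (point_vars n) Q \<and>
     (\<forall>y\<in>torus (point_vars n). inj_on (\<lambda>i. y (Some i)) {1..n} \<longrightarrow>
        W_fun N lam I (\<lambda>k a. y (Some (pidx J k a))) (\<lambda>c. y (Some (\<sigma> c))) (y None)
          = E_fun N lam (\<lambda>k a. y (Some (pidx J k a))) (y None) * Q y)"
proof -
  let ?V = "point_vars n"
  define E where "E y = E_fun N lam (\<lambda>k a. y (Some (pidx J k a))) (y None)" for y
  define S where "S = specialized_cofactor N lam I J \<sigma>"
  define A where "A = (SIGMA k:{1..N-1}. offdiag (lamsum lam k))"
  define pu where "pu = (\<lambda>(k, a, b :: nat). Some (pidx J k a))"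
  define pw where "pw = (\<lambda>(k, a :: nat, b). Some (pidx J k b))"
  define D where "D y = (\<Prod>i\<in>A. y (pu i) - y (pw i))" for y :: "nat option \<Rightarrow> complex"
  obtain L where L: "laurent_on ?V L" "\<forall>y\<in>torus ?V. inj_on (\<lambda>i. y (Some i)) {1..n} \<longrightarrow>
      W_fun N lam I (\<lambda>k a. y (Some (pidx J k a))) (\<lambda>c. y (Some (\<sigma> c))) (y None) = L y"
    using W_fun_specialize_laurent by blast
  have finite_V: "finite ?V" by (simp add: point_vars_def)
  have finite_A: "finite A" unfolding A_def by (intro finite_SigmaI finite_offdiag) simp
  have A: "\<forall>i\<in>A. pu i \<in> ?V \<and> pw i \<in> ?V \<and> pu i \<noteq> pw i \<and> pu i \<noteq> None \<and> pw i \<noteq> None"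
  proof
    fix i assume "i \<in> A"
    then obtain k a b where i: "i = (k, a, b)" and k: "k \<in> {1..N-1}"
      and ab: "a \<in> {1..lamsum lam k}" "b \<in> {1..lamsum lam k}" "a \<noteq> b"
      by (auto simp: A_def offdiag_def)
    then show "pu i \<in> ?V \<and> pw i \<in> ?V \<and> pu i \<noteq> pw i \<and> pu i \<noteq> None \<and> pw i \<noteq> None"
      using pidx_J_in[OF k] inj_on_contraD[OF inj_on_pidx_J[OF k] ab(3,1,2)]
      by (simp add: pu_def pw_def point_vars_def)
  qed
  have D_ne: "D y \<noteq> 0" if inj: "inj_on (\<lambda>i. y (Some i)) {1..n}" for y
  proof -
    have "y (pu i) \<noteq> y (pw i)" if i: "i \<in> A" for i
    proof -
      obtain u w where "pu i = Some u" "pw i = Some w" "u \<in> {1..n}" "w \<in> {1..n}" "u \<noteq> w"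
        using A i by (auto simp: point_vars_def)
      then show ?thesis using inj_on_contraD[OF inj] by auto
    qed
    then show ?thesis using finite_A by (simp add: D_def)
  qed
  have laurent_E: "laurent_on ?V E"
    unfolding E_def[abs_def] E_fun_def using pidx_J_in
    by (intro laurent_on_prod laurent_on_diff laurent_on_divide_var laurent_on_mult laurent_on_const
        laurent_on_var) (auto simp: point_vars_def)
  have laurent_D: "laurent_on ?V D"
    unfolding D_def[abs_def] using A finite_V
    by (intro laurent_on_prod laurent_on_diff laurent_on_var) auto
  have "level_diffs N lam (\<lambda>k a. y (Some (pidx J k a))) = D y" for y
    unfolding level_diffs_Sigma D_def A_def pu_def pw_def by (simp add: split_beta)
  then have ES_generic: "E y * S y = L y * D y"
    if "y \<in> torus ?V" "inj_on (\<lambda>i. y (Some i)) {1..n}" for y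
    using W_fun_specialize_mult_level_diffs[OF that] L(2) that by (simp add: E_def S_def)
  have ES: "E y * S y = L y * D y" if "y \<in> torus ?V" for y
  proof (rule laurent_on_eq_if_eq_off_diagonals[OF finite_V laurent_on_mult laurent_on_mult
        finite_offdiag _ _ that])
    show "laurent_on ?V E" "laurent_on ?V S" "laurent_on ?V L" "laurent_on ?V D"
      unfolding S_def by (fact laurent_E laurent_on_specialized_cofactor L(1) laurent_D)+
    show "\<forall>i\<in>offdiag n. Some (fst i) \<in> ?V \<and> Some (snd i) \<in> ?V \<and> Some (fst i) \<noteq> Some (snd i)"
      by (auto simp: offdiag_def point_vars_def)
    fix y assume y: "y \<in> torus ?V" and off: "\<forall>i\<in>offdiag n. y (Some (fst i)) \<noteq> y (Some (snd i))"
    have "inj_on (\<lambda>i. y (Some i)) {1..n}"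
    proof (rule inj_onI, rule ccontr)
      fix a b assume "a \<in> {1..n}" "b \<in> {1..n}" "y (Some a) = y (Some b)" "a \<noteq> b"
      then show False using off by (auto simp: offdiag_def)
    qed
    then show "E y * S y = L y * D y" by (rule ES_generic[OF y])
  qed
  have "eventually (\<lambda>e. E (y(None := y None + e)) \<noteq> 0) (at 0)" if "y \<in> torus ?V" for y
    using that pidx_J_in eventually_E_fun_ne_0[of N lam "\<lambda>k a. y (Some (pidx J k a))" "y None"]
    by (auto simp: E_def torus_def point_vars_def)
  with laurent_on_factor_prod_diffs[OF finite_V finite_A laurent_E _ L(1) A _ ES[unfolded D_def]]
  obtain Q where Q: "laurent_on ?V Q" "\<forall>y\<in>torus ?V. S y = D y * Q y"
    unfolding S_def D_def using laurent_on_specialized_cofactor by blast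
  show ?thesis
  proof (intro exI[of _ Q] conjI ballI impI)
    fix y assume y: "y \<in> torus ?V" and inj: "inj_on (\<lambda>i. y (Some i)) {1..n}"
    have "D y * (E y * Q y) = D y * L y"
      using ES[OF y] Q(2) y by (simp add: ac_simps)
    then show "W_fun N lam I (\<lambda>k a. y (Some (pidx J k a))) (\<lambda>c. y (Some (\<sigma> c))) (y None)
        = E_fun N lam (\<lambda>k a. y (Some (pidx J k a))) (y None) * Q y"
      using D_ne[OF inj] L(2) y inj by (simp add: E_def)
  qed (rule Q(1))
qed

end

section \<open>Coefficient representation\<close>

definition exponent_vector :: "nat \<Rightarrow> (nat option \<Rightarrow> int) \<Rightarrow> (nat \<Rightarrow>\<^sub>0 int)" where
  "exponent_vector n e =
     Abs_poly_mapping (\<lambda>i. if i = 0 then e None else if i \<in> {1..n} then e (Some i) else 0)"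

lemma lookup_exponent_vector:
  "Poly_Mapping.lookup (exponent_vector n e) i =
     (if i = 0 then e None else if i \<in> {1..n} then e (Some i) else 0)"
proof -
  have "finite {i. (if i = 0 then e None else if i \<in> {1..n} then e (Some i) else 0) \<noteq> 0}"
    by (rule finite_subset[of _ "{0..n}"]) auto
  then show ?thesis by (simp add: exponent_vector_def)
qed

lemma keys_exponent_vector: "Poly_Mapping.keys (exponent_vector n e) \<subseteq> {0..n}"
  by (auto simp: in_keys_iff lookup_exponent_vector split: if_splits)

lemma laurent_eval_add: "laurent_eval (P + Q) n z h = laurent_eval P n z h + laurent_eval Q n z h"
proof -
  define mono where
    "mono m = h powi Poly_Mapping.lookup m 0 * (\<Prod>i\<in>{1..n}. z i powi Poly_Mapping.lookup m i)"
    for m :: "nat \<Rightarrow>\<^sub>0 int"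
  have eval: "laurent_eval R n z h = (\<Sum>m\<in>K. Poly_Mapping.lookup R m * mono m)"
    if "finite K" "Poly_Mapping.keys R \<subseteq> K" for R K
    unfolding laurent_eval_def mono_def mult.assoc using that
    by (intro sum.mono_neutral_left) (auto simp: in_keys_iff)
  let ?K = "Poly_Mapping.keys P \<union> Poly_Mapping.keys Q"
  show ?thesis
    using eval[of ?K P] eval[of ?K Q] eval[of ?K "P + Q"] keys_add[of P Q]
    by (simp add: lookup_add distrib_right sum.distrib)
qed

lemma laurent_eval_of_laurent_on:
  assumes "laurent_on (point_vars n) F"
  shows "\<exists>Q. laurent_vars Q n \<and>
    (\<forall>z h. (\<forall>i\<in>{1..n}. z i \<noteq> 0) \<longrightarrow> h \<noteq> 0 \<longrightarrow> laurent_eval Q n z h = F (case_option h z))"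
proof -
  obtain M where M: "\<forall>y\<in>torus (point_vars n). F y = monomial_sum (point_vars n) M y"
    using assms unfolding laurent_on_def by blast
  define Q where "Q = (\<Sum>p\<leftarrow>M. Poly_Mapping.single (exponent_vector n (snd p)) (fst p))"
  have "Poly_Mapping.keys Q \<subseteq> range (exponent_vector n)"
    unfolding Q_def by (induction M) (auto dest!: subsetD[OF keys_add] split: if_splits)
  then have "laurent_vars Q n"
    using keys_exponent_vector by (auto simp: laurent_vars_def)
  moreover have "laurent_eval Q n z h = monomial_sum (point_vars n) M (case_option h z)" for z h
  proof -
    have "point_vars n = insert None (Some ` {1..n})" "None \<notin> Some ` {1..n}"
      by (auto simp: point_vars_def)
    then have monomial: "laurent_monomial (point_vars n) e (case_option h z)
        = h powi Poly_Mapping.lookup (exponent_vector n e) 0 *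
          (\<Prod>i\<in>{1..n}. z i powi Poly_Mapping.lookup (exponent_vector n e) i)" for e
      by (simp add: laurent_monomial_def prod.reindex lookup_exponent_vector)
    show ?thesis
      unfolding Q_def monomial_sum_def
      by (induction M) (simp_all add: laurent_eval_add monomial, simp_all add: laurent_eval_def)
  qed
  moreover have "case_option h z \<in> torus (point_vars n)" if "\<forall>i\<in>{1..n}. z i \<noteq> 0" "h \<noteq> 0" for z h
    using that by (auto simp: torus_def point_vars_def)
  ultimately show ?thesis
    using M by metis
qed

theorem lemma6p1:
  fixes N n :: nat and lam :: "nat \<Rightarrow> nat" and \<sigma> :: "nat \<Rightarrow> nat" and I J :: "nat \<Rightarrow> nat set"
  assumes "(\<Sum>k=1..N. lam k) = n"
    and "\<sigma> permutes {1..n}"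
    and "ordered_partition N n lam I"
    and "ordered_partition N n lam J"
  shows "\<exists>Q. laurent_vars Q n \<and>
           (\<forall>z h. (\<forall>i\<in>{1..n}. z i \<noteq> 0) \<longrightarrow> inj_on z {1..n} \<longrightarrow> h \<noteq> 0 \<longrightarrow>
              W_sigma N lam \<sigma> I (zJ J z) z h = E_fun N lam (zJ J z) h * laurent_eval Q n z h)"
proof -
  have "ordered_partition N n lam (\<lambda>k. inv \<sigma> ` I k)"
    using assms(3) permutes_inv[OF assms(2)] by (rule ordered_partition_permutes_image)
  from W_fun_specialize_factor_E[OF this assms(4,2)] obtain F where F: "laurent_on (point_vars n) F"
    "\<forall>y\<in>torus (point_vars n). inj_on (\<lambda>i. y (Some i)) {1..n} \<longrightarrow>
       W_fun N lam (\<lambda>k. inv \<sigma> ` I k) (\<lambda>k a. y (Some (pidx J k a))) (\<lambda>c. y (Some (\<sigma> c))) (y None)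
         = E_fun N lam (\<lambda>k a. y (Some (pidx J k a))) (y None) * F y"
    by blast
  obtain Q where Q: "laurent_vars Q n"
    "\<forall>z h. (\<forall>i\<in>{1..n}. z i \<noteq> 0) \<longrightarrow> h \<noteq> 0 \<longrightarrow> laurent_eval Q n z h = F (case_option h z)"
    using laurent_eval_of_laurent_on[OF F(1)] by blast
  show ?thesis
  proof (intro exI[of _ Q] conjI allI impI)
    fix z :: "nat \<Rightarrow> complex" and h :: complex
    assume z: "\<forall>i\<in>{1..n}. z i \<noteq> 0" and "inj_on z {1..n}" and "h \<noteq> 0"
    then have "case_option h z \<in> torus (point_vars n)" "inj_on (\<lambda>i. case_option h z (Some i)) {1..n}"
      by (auto simp: torus_def point_vars_def)
    from mp[OF bspec[OF F(2) this(1)] this(2)]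
    show "W_sigma N lam \<sigma> I (zJ J z) z h = E_fun N lam (zJ J z) h * laurent_eval Q n z h"
      using Q(2) z \<open>h \<noteq> 0\<close> by (simp add: W_sigma_def zJ_def[abs_def])
  qed (rule Q(1))
qed

end
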